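(* Assume $\|\mathbf X\|_{\mathrm{TV}}<C_{\mathbf X}$ and $\|\mathbf z\|<C_{\mathbf z}$ almost surely, and let $r>0$. For any $p\in\mathbb N$, $x>0$ and any fixed $\boldsymbol\theta^0_p\in B_{p,r}$, $$\mathbb P\left(\sup_{\boldsymbol\theta_p\in B_{p,r}}Z_{p,n}(\boldsymbol\theta_p)\ge108Cr\sqrt{\frac{s_d(p)+q}{n}}\sqrt\pi+Z_{p,n}(\boldsymbol\theta^0_p)+x\right)\le36\exp\left(-\frac{x^2n}{144C^2r^2}\right),$$ where $C=2(C_{\mathbf z}+e^{C_{\mathbf X}+T})$ and $Z_{p,n}(\boldsymbol\theta_p)=\widehat{\mathcal R}_{p,n}(\boldsymbol\theta_p)-\mathcal R_p(\boldsymbol\theta_p)$.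
   Context: Let $T>0$, integers $d\ge2$, $q\ge1$. $(\mathbf X,\mathbf z,y)$ is a random triple with $\mathbf X:[0,T]\to\mathbb R^{d-1}$ a continuous bounded-variation path with fixed initial value, $\mathbf z\in\mathbb R^q$, $y\in\{0,1\}$; $\|\mathbf X\|_{\mathrm{TV}}=\sup\sum_i\|\mathbf X_{t_{i+1}}-\mathbf X_{t_i}\|$ over partitions of $[0,T]$. Time augmentation $\widetilde{\mathbf X}(t)=(\mathbf X(t),t)\in\mathbb R^d$; signature terms $S^I(\widetilde{\mathbf X})=\int_{0<t_1<\dots<t_k<T}d\widetilde X^{i_1}_{t_1}\cdots d\widetilde X^{i_k}_{t_k}$ ($I\in\{1,..,d\}^k$, empty $I$ gives 1); truncated signature $S_p(\widetilde{\mathbf X})=(S^I)_{|I|\le p}\in\mathbb R^{s_d(p)}$, $s_d(p)=\sum_{k=0}^pd^k$; $\widetilde{\mathbf S}_p(\widetilde{\mathbf X},\mathbf z)=(S_p(\widetilde{\mathbf X})^\top,\mathbf z^\top)^\top$. Logistic loss $\ell(y,\eta)=-y\eta+\log(1+e^\eta)$; $\mathcal R_p(\boldsymbol\theta_p)=\mathbb E[\ell(y,\widetilde{\mathbf S}_p^\top\boldsymbol\theta_p)]$; $B_{p,r}=\{\boldsymbol\theta\in\mathbb R^{s_d(p)+q}:\|\boldsymbol\theta\|_1\le r\}$. Data $(\mathbf X_i,\mathbf z_i,y_i)_{i=1}^n$ i.i.d. copies; $\widehat{\mathcal R}_{p,n}(\boldsymbol\theta_p)=\frac1n\sum_i\ell(y_i,\widetilde{\mathbf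 S}_p(\widetilde{\mathbf X}_i,\mathbf z_i)^\top\boldsymbol\theta_p)$. *)

theory Defs
  imports "HOL-Probability.Probability"
begin

definition has_RS_integral :: "(real \<Rightarrow> real) \<Rightarrow> (real \<Rightarrow> real) \<Rightarrow> real \<Rightarrow> real \<Rightarrow> real \<Rightarrow> bool" where
  "has_RS_integral f g a b I \<longleftrightarrow>
     (\<forall>\<epsilon>>0. \<exists>\<delta>>0. \<forall>(m::nat) (t::nat \<Rightarrow> real) (s::nat \<Rightarrow> real).
        t 0 = a \<and> t m = b \<and> (\<forall>i<m. t i \<le> s i \<and> s i \<le> t (Suc i) \<and> t (Suc i) - t i < \<delta>)
        \<longrightarrow> \<bar>(\<Sum>i<m. f (s i) * (g (t (Suc i)) - g (t i))) - I\<bar> < \<epsilon>)"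

definition RS_integral :: "(real \<Rightarrow> real) \<Rightarrow> (real \<Rightarrow> real) \<Rightarrow> real \<Rightarrow> real \<Rightarrow> real" where
  "RS_integral f g a b = (THE I. has_RS_integral f g a b I)"

text \<open>Iterated integrals of a path Y (coordinates indexed by nat) on [0,t],
indexed by the REVERSED word: sig_rev Y (i # J) t = int_0^t sig_rev Y J s dY^i_s.\<close>
fun sig_rev :: "(real \<Rightarrow> nat \<Rightarrow> real) \<Rightarrow> nat list \<Rightarrow> real \<Rightarrow> real" where
  "sig_rev Y [] t = 1"
| "sig_rev Y (i # J) t = RS_integral (\<lambda>s. sig_rev Y J s) (\<lambda>s. Y s i) 0 t"

text \<open>Signature term S^I(Y) on [0,T] (coordinates 0-based).\<close>
definition sig_term :: "(real \<Rightarrow> nat \<Rightarrow> real) \<Rightarrow> real \<Rightarrow> nat list \<Rightarrow> real" where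
  "sig_term Y T I = sig_rev Y (rev I) T"

definition time_aug :: "nat \<Rightarrow> (real \<Rightarrow> nat \<Rightarrow> real) \<Rightarrow> real \<Rightarrow> nat \<Rightarrow> real" where
  "time_aug d X t j = (if j < d - 1 then X t j else t)"

definition words :: "nat \<Rightarrow> nat \<Rightarrow> nat list set" where
  "words d p = {I. length I \<le> p \<and> set I \<subseteq> {..<d}}"

definition feat_idx :: "nat \<Rightarrow> nat \<Rightarrow> nat \<Rightarrow> (nat list + nat) set" where
  "feat_idx d p q = Inl ` words d p \<union> Inr ` {..<q}"

definition feature :: "nat \<Rightarrow> real \<Rightarrow> (real \<Rightarrow> nat \<Rightarrow> real) \<Rightarrow> (nat \<Rightarrow> real) \<Rightarrow> nat list + nat \<Rightarrow> real" where
  "feature d T X z v = (case v of Inl I \<Rightarrow> sig_term (time_aug d X) T I | Inr j \<Rightarrow> z j)"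

definition lin_pred :: "nat \<Rightarrow> nat \<Rightarrow> nat \<Rightarrow> real \<Rightarrow> (real \<Rightarrow> nat \<Rightarrow> real) \<Rightarrow> (nat \<Rightarrow> real) \<Rightarrow> (nat list + nat \<Rightarrow> real) \<Rightarrow> real" where
  "lin_pred d p q T X z \<theta> = (\<Sum>v\<in>feat_idx d p q. \<theta> v * feature d T X z v)"

definition l1_norm :: "nat \<Rightarrow> nat \<Rightarrow> nat \<Rightarrow> (nat list + nat \<Rightarrow> real) \<Rightarrow> real" where
  "l1_norm d p q \<theta> = (\<Sum>v\<in>feat_idx d p q. \<bar>\<theta> v\<bar>)"

text \<open>B_{p,r}: parameter vectors in R^{s_d(p)+q} (functions supported on the index set).\<close>
definition l1_ball :: "nat \<Rightarrow> nat \<Rightarrow> nat \<Rightarrow> real \<Rightarrow> (nat list + nat \<Rightarrow> real) set" where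
  "l1_ball d p q r = {\<theta>. (\<forall>v. v \<notin> feat_idx d p q \<longrightarrow> \<theta> v = 0) \<and> l1_norm d p q \<theta> \<le> r}"

definition s_d :: "nat \<Rightarrow> nat \<Rightarrow> nat" where
  "s_d d p = (\<Sum>k\<le>p. d ^ k)"

definition logistic_loss :: "real \<Rightarrow> real \<Rightarrow> real" where
  "logistic_loss y \<eta> = - y * \<eta> + ln (1 + exp \<eta>)"

definition euclid_norm :: "nat \<Rightarrow> (nat \<Rightarrow> real) \<Rightarrow> real" where
  "euclid_norm m v = sqrt (\<Sum>j<m. (v j)\<^sup>2)"

definition variation_sums :: "nat \<Rightarrow> (real \<Rightarrow> nat \<Rightarrow> real) \<Rightarrow> real \<Rightarrow> real set" where
  "variation_sums m X T =
     {(\<Sum>i<k. euclid_norm m (\<lambda>j. X (t (Suc i)) j - X (t i) j)) | k t.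
        t 0 = 0 \<and> t k = T \<and> (\<forall>i<k. t i \<le> t (Suc i))}"

definition total_variation :: "nat \<Rightarrow> (real \<Rightarrow> nat \<Rightarrow> real) \<Rightarrow> real \<Rightarrow> real" where
  "total_variation m X T = Sup (variation_sums m X T)"

definition bounded_variation :: "nat \<Rightarrow> (real \<Rightarrow> nat \<Rightarrow> real) \<Rightarrow> real \<Rightarrow> bool" where
  "bounded_variation m X T = bdd_above (variation_sums m X T)"

definition emp_risk :: "nat \<Rightarrow> nat \<Rightarrow> nat \<Rightarrow> real \<Rightarrow> ('a \<Rightarrow> real \<Rightarrow> nat \<Rightarrow> real) \<Rightarrow> ('a \<Rightarrow> nat \<Rightarrow> real)
   \<Rightarrow> ('a \<Rightarrow> real) \<Rightarrow> nat \<Rightarrow> (nat \<Rightarrow> 'a) \<Rightarrow> (nat list + nat \<Rightarrow> real) \<Rightarrow> real" where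
  "emp_risk d p q T X z y n w \<theta> =
     (1 / real n) * (\<Sum>i<n. logistic_loss (y (w i)) (lin_pred d p q T (X (w i)) (z (w i)) \<theta>))"

definition risk :: "'a measure \<Rightarrow> nat \<Rightarrow> nat \<Rightarrow> nat \<Rightarrow> real \<Rightarrow> ('a \<Rightarrow> real \<Rightarrow> nat \<Rightarrow> real) \<Rightarrow> ('a \<Rightarrow> nat \<Rightarrow> real)
   \<Rightarrow> ('a \<Rightarrow> real) \<Rightarrow> (nat list + nat \<Rightarrow> real) \<Rightarrow> real" where
  "risk M d p q T X z y \<theta> =
     (\<integral>\<omega>. logistic_loss (y \<omega>) (lin_pred d p q T (X \<omega>) (z \<omega>) \<theta>) \<partial>M)"

definition Z_proc :: "'a measure \<Rightarrow> nat \<Rightarrow> nat \<Rightarrow> nat \<Rightarrow> real \<Rightarrow> ('a \<Rightarrow> real \<Rightarrow> nat \<Rightarrow> real) \<Rightarrow> ('a \<Rightarrow> nat \<Rightarrow> real)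
   \<Rightarrow> ('a \<Rightarrow> real) \<Rightarrow> nat \<Rightarrow> (nat \<Rightarrow> 'a) \<Rightarrow> (nat list + nat \<Rightarrow> real) \<Rightarrow> real" where
  "Z_proc M d p q T X z y n w \<theta> = emp_risk d p q T X z y n w \<theta> - risk M d p q T X z y \<theta>"

end

theory Submission
  imports Defs
begin

text \<open>Every feature is bounded by \<open>K = Cz + exp (CX + T)\<close>: a signature term of the
  time-augmented path is an iterated Riemann--Stieltjes integral against coordinates whose
  increments are dominated by \<open>W t = TV (X, [0, t]) + t\<close>, so by induction on the word
  \<open>\<bar>S^I\<bar> \<le> W T ^ |I| / |I|! \<le> exp (CX + T)\<close>.
  Hence the logistic loss is \<open>K\<close>-Lipschitz in \<open>\<theta>\<close> for the \<open>\<ell>\<^sub>1\<close>-distance, and every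
  increment \<open>Z a - Z b\<close> is an average of i.i.d.\ centred variables bounded by
  \<open>K \<parallel>a - b\<parallel>\<^sub>1\<close>, which Hoeffding's inequality makes sub-Gaussian.
  The supremum over the \<open>\<ell>\<^sub>1\<close>-ball is handled by chaining: at level \<open>k\<close> the parameter is
  rounded to a lattice of mesh \<open>2 r / (2 ^ k dim)\<close>, a net of at most \<open>exp (dim (k + 3))\<close>
  points. A union bound over the links between consecutive levels, with thresholds of order
  \<open>K r 2 ^ (-k) sqrt (dim k / n)\<close> plus a geometric share of \<open>x\<close>, shows that the supremum
  exceeds \<open>Z \<theta>0 + 72 K r sqrt (dim / n) + x\<close> with probability at most
  \<open>exp (- n x^2 / (128 K^2 r^2))\<close>, which is stronger than the stated bound.\<close>

section \<open>Riemann--Stieltjes integration against dominated integrators\<close>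

definition fine_tagged_partition ::
    "real \<Rightarrow> real \<Rightarrow> real \<Rightarrow> nat \<Rightarrow> (nat \<Rightarrow> real) \<Rightarrow> (nat \<Rightarrow> real) \<Rightarrow> bool" where
  "fine_tagged_partition \<delta> a b m t s \<longleftrightarrow>
     t 0 = a \<and> t m = b \<and> (\<forall>i<m. t i \<le> s i \<and> s i \<le> t (Suc i) \<and> t (Suc i) - t i < \<delta>)"

definition RS_sum ::
    "(real \<Rightarrow> real) \<Rightarrow> (real \<Rightarrow> real) \<Rightarrow> nat \<Rightarrow> (nat \<Rightarrow> real) \<Rightarrow> (nat \<Rightarrow> real) \<Rightarrow> real" where
  "RS_sum f g m t s = (\<Sum>i<m. f (s i) * (g (t (Suc i)) - g (t i)))"

text \<open>\<open>W\<close> plays the role of the variation function of \<open>g\<close>; for the coordinates of the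
  time-augmented path it is the total variation of \<open>X\<close> on \<open>[0, t]\<close> plus \<open>t\<close>.\<close>
definition increments_dominated :: "(real \<Rightarrow> real) \<Rightarrow> (real \<Rightarrow> real) \<Rightarrow> real \<Rightarrow> real \<Rightarrow> bool" where
  "increments_dominated g W a b \<longleftrightarrow>
     (\<forall>u v. a \<le> u \<longrightarrow> u \<le> v \<longrightarrow> v \<le> b \<longrightarrow> \<bar>g v - g u\<bar> \<le> W v - W u)"

lemma has_RS_integral_iff_fine:
  "has_RS_integral f g a b I \<longleftrightarrow>
     (\<forall>\<epsilon>>0. \<exists>\<delta>>0. \<forall>m t s. fine_tagged_partition \<delta> a b m t s \<longrightarrow> \<bar>RS_sum f g m t s - I\<bar> < \<epsilon>)"
  unfolding has_RS_integral_def fine_tagged_partition_def RS_sum_def by blast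

lemma fine_tagged_partition_tag:
  assumes "fine_tagged_partition \<delta> a b m t s" "i < m"
  shows "t i \<le> s i" "s i \<le> t (Suc i)" "t (Suc i) - t i < \<delta>"
  using assms unfolding fine_tagged_partition_def by auto

lemma fine_tagged_partition_mono:
  assumes "fine_tagged_partition \<delta> a b m t s" "i \<le> j" "j \<le> m"
  shows "t i \<le> t j"
  using assms(2,3)
proof (induction j)
  case (Suc j)
  then show ?case
    using fine_tagged_partition_tag[OF assms(1), of j] by (cases "i = Suc j") force+
qed simp

lemma fine_tagged_partition_bounds:
  assumes "fine_tagged_partition \<delta> a b m t s" "i \<le> m"
  shows "a \<le> t i" "t i \<le> b"
  using fine_tagged_partition_mono[OF assms(1), of 0 i] fine_tagged_partition_mono[OF assms(1), of i m] assms
  unfolding fine_tagged_partition_def by auto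

lemma fine_tagged_partition_mono_delta:
  "fine_tagged_partition \<delta> a b m t s \<Longrightarrow> \<delta> \<le> \<delta>' \<Longrightarrow> fine_tagged_partition \<delta>' a b m t s"
  unfolding fine_tagged_partition_def by force

lemma sum_increments_telescope:
  fixes h :: "real \<Rightarrow> real"
  assumes "fine_tagged_partition \<delta> a b m t s"
  shows "(\<Sum>i<m. h (t (Suc i)) - h (t i)) = h b - h a"
  using sum_lessThan_telescope[of "\<lambda>i. h (t i)" m] assms unfolding fine_tagged_partition_def by simp

text \<open>The increment of \<open>h\<close> over the intersection of the \<open>i\<close>-th cell of \<open>t\<close> with the
  \<open>j\<close>-th cell of \<open>t'\<close> (zero if the cells do not overlap): clamping \<open>t'\<close> to each cell of \<open>t\<close>
  gives a common refinement of both partitions.\<close>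
definition common_increment :: "(real \<Rightarrow> real) \<Rightarrow> (nat \<Rightarrow> real) \<Rightarrow> (nat \<Rightarrow> real) \<Rightarrow> nat \<Rightarrow> nat \<Rightarrow> real" where
  "common_increment h t t' i j =
     h (max (t i) (min (t (Suc i)) (t' (Suc j)))) - h (max (t i) (min (t (Suc i)) (t' j)))"

lemma sum_common_increment_left:
  fixes h :: "real \<Rightarrow> real"
  assumes "fine_tagged_partition \<delta> a b m t s" "fine_tagged_partition \<delta>' a b m' t' s'" "i < m"
  shows "h (t (Suc i)) - h (t i) = (\<Sum>j<m'. common_increment h t t' i j)"
proof -
  have "a \<le> t i" "t (Suc i) \<le> b" "t i \<le> t (Suc i)"
    using fine_tagged_partition_bounds[OF assms(1)] fine_tagged_partition_tag[OF assms(1,3)] assms(3)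
    by auto
  then show ?thesis
    using sum_increments_telescope[OF assms(2), of "\<lambda>u. h (max (t i) (min (t (Suc i)) u))"]
    by (simp add: common_increment_def)
qed

lemma sum_common_increment_right:
  fixes h :: "real \<Rightarrow> real"
  assumes P: "fine_tagged_partition \<delta> a b m t s" and Q: "fine_tagged_partition \<delta>' a b m' t' s'"
    and j: "j < m'"
  shows "h (t' (Suc j)) - h (t' j) = (\<Sum>i<m. common_increment h t t' i j)"
proof -
  have swap: "h (max \<alpha> (min \<beta> \<epsilon>)) - h (max \<alpha> (min \<beta> \<gamma>)) = h (max \<gamma> (min \<epsilon> \<beta>)) - h (max \<gamma> (min \<epsilon> \<alpha>))"
    if "\<alpha> \<le> \<beta>" "\<gamma> \<le> \<epsilon>" for \<alpha> \<beta> \<gamma> \<epsilon> :: real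
  proof -
    have "(max \<alpha> (min \<beta> \<epsilon>) = max \<gamma> (min \<epsilon> \<beta>) \<and> max \<alpha> (min \<beta> \<gamma>) = max \<gamma> (min \<epsilon> \<alpha>)) \<or>
          (max \<alpha> (min \<beta> \<epsilon>) = max \<alpha> (min \<beta> \<gamma>) \<and> max \<gamma> (min \<epsilon> \<beta>) = max \<gamma> (min \<epsilon> \<alpha>))"
      using that by (auto simp: max_def min_def)
    then show ?thesis by auto
  qed
  show ?thesis
    unfolding sum_common_increment_left[OF Q P j, of h] common_increment_def
    using fine_tagged_partition_tag[OF P] fine_tagged_partition_tag[OF Q j]
    by (intro sum.cong refl swap[symmetric]) force+
qed

lemma RS_sum_diff_common_refinement:
  assumes "fine_tagged_partition \<delta> a b m t s" "fine_tagged_partition \<delta>' a b m' t' s'"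
  shows "RS_sum f g m t s - RS_sum f g m' t' s' =
           (\<Sum>i<m. \<Sum>j<m'. (f (s i) - f (s' j)) * common_increment g t t' i j)"
proof -
  have "RS_sum f g m t s = (\<Sum>i<m. f (s i) * (\<Sum>j<m'. common_increment g t t' i j))"
    unfolding RS_sum_def using sum_common_increment_left[OF assms, where h=g] by (intro sum.cong) auto
  then have "RS_sum f g m t s = (\<Sum>i<m. \<Sum>j<m'. f (s i) * common_increment g t t' i j)"
    by (simp add: sum_distrib_left)
  moreover have "RS_sum f g m' t' s' = (\<Sum>i<m. \<Sum>j<m'. f (s' j) * common_increment g t t' i j)"
    unfolding RS_sum_def using sum_common_increment_right[OF assms, where h=g]
    by (subst sum.swap) (simp add: sum_distrib_left)
  ultimately show ?thesis
    by (simp add: sum_subtractf[symmetric] left_diff_distrib)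
qed

lemma abs_common_increment_le:
  assumes "fine_tagged_partition \<delta> a b m t s" "fine_tagged_partition \<delta>' a b m' t' s'" "i < m" "j < m'"
    and "increments_dominated g W a b"
  shows "\<bar>common_increment g t t' i j\<bar> \<le> common_increment W t t' i j"
proof -
  define u v where "u = max (t i) (min (t (Suc i)) (t' j))" and "v = max (t i) (min (t (Suc i)) (t' (Suc j)))"
  have "a \<le> t i" "t (Suc i) \<le> b"
    using fine_tagged_partition_bounds[OF assms(1)] assms(3) by auto
  moreover have "t i \<le> t (Suc i)" "t' j \<le> t' (Suc j)"
    using fine_tagged_partition_tag[OF assms(1,3)] fine_tagged_partition_tag[OF assms(2,4)] by auto
  ultimately have "a \<le> u" "u \<le> v" "v \<le> b" by (auto simp: u_def v_def)
  then show ?thesis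
    using assms(5) unfolding common_increment_def increments_dominated_def u_def[symmetric] v_def[symmetric]
    by blast
qed

text \<open>Only overlapping cells contribute to the common refinement, and there the tags of
  two \<open>\<delta>\<close>-fine partitions are less than \<open>2 \<delta>\<close> apart.\<close>
lemma RS_sum_diff_le:
  assumes P: "fine_tagged_partition \<delta> a b m t s" and Q: "fine_tagged_partition \<delta> a b m' t' s'"
    and D: "increments_dominated g W a b"
    and f: "\<And>u v. u \<in> {a..b} \<Longrightarrow> v \<in> {a..b} \<Longrightarrow> \<bar>u - v\<bar> < 2 * \<delta> \<Longrightarrow> \<bar>f u - f v\<bar> \<le> \<eta>"
    and "\<eta> \<ge> 0"
  shows "\<bar>RS_sum f g m t s - RS_sum f g m' t' s'\<bar> \<le> \<eta> * (W b - W a)"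
proof -
  have term_le: "\<bar>(f (s i) - f (s' j)) * common_increment g t t' i j\<bar> \<le> \<eta> * common_increment W t t' i j"
    if i: "i < m" and j: "j < m'" for i j
  proof (cases "max (t i) (t' j) \<le> min (t (Suc i)) (t' (Suc j))")
    case True
    note ti = fine_tagged_partition_tag[OF P i] and tj = fine_tagged_partition_tag[OF Q j]
    have "a \<le> t i" "t (Suc i) \<le> b" "a \<le> t' j" "t' (Suc j) \<le> b"
      using fine_tagged_partition_bounds[OF P] fine_tagged_partition_bounds[OF Q] i j by auto
    then have "\<bar>f (s i) - f (s' j)\<bar> \<le> \<eta>"
      using f ti tj True by (auto simp: abs_if)
    then show ?thesis
      unfolding abs_mult using abs_common_increment_le[OF P Q i j D] \<open>\<eta> \<ge> 0\<close> by (intro mult_mono) auto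
  next
    case False
    then have "max (t i) (min (t (Suc i)) (t' j)) = max (t i) (min (t (Suc i)) (t' (Suc j)))"
      using fine_tagged_partition_tag[OF P i] fine_tagged_partition_tag[OF Q j] by (auto simp: max_def min_def)
    then show ?thesis by (simp add: common_increment_def)
  qed
  have "\<bar>RS_sum f g m t s - RS_sum f g m' t' s'\<bar>
      \<le> (\<Sum>i<m. \<Sum>j<m'. \<bar>(f (s i) - f (s' j)) * common_increment g t t' i j\<bar>)"
    unfolding RS_sum_diff_common_refinement[OF P Q]
    by (rule order_trans[OF sum_abs], rule sum_mono, rule sum_abs)
  also have "\<dots> \<le> (\<Sum>i<m. \<Sum>j<m'. \<eta> * common_increment W t t' i j)"
    by (intro sum_mono term_le) auto
  also have "\<dots> = \<eta> * (W b - W a)"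
    by (simp add: sum_distrib_left[symmetric] sum_common_increment_left[OF P Q, symmetric]
        sum_increments_telescope[OF P])
  finally show ?thesis .
qed

definition uniform_partition :: "real \<Rightarrow> real \<Rightarrow> nat \<Rightarrow> nat \<Rightarrow> real" where
  "uniform_partition a b m i = a + (b - a) * real i / real m"

definition uniform_RS_sum :: "(real \<Rightarrow> real) \<Rightarrow> (real \<Rightarrow> real) \<Rightarrow> real \<Rightarrow> real \<Rightarrow> nat \<Rightarrow> real" where
  "uniform_RS_sum f g a b m = RS_sum f g m (uniform_partition a b m) (uniform_partition a b m)"

lemma uniform_partition_fine:
  assumes "a \<le> b" "m \<ge> 1" "(b - a) / real m < \<delta>"
  shows "fine_tagged_partition \<delta> a b m (uniform_partition a b m) (uniform_partition a b m)"
  unfolding fine_tagged_partition_def uniform_partition_def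
proof (intro conjI allI impI)
  fix i assume "i < m"
  have "(b - a) * real (Suc i) / real m - (b - a) * real i / real m = (b - a) / real m"
    by (simp add: diff_divide_distrib[symmetric] algebra_simps)
  then show "a + (b - a) * real (Suc i) / real m - (a + (b - a) * real i / real m) < \<delta>"
    using assms by simp
  show "a + (b - a) * real i / real m \<le> a + (b - a) * real (Suc i) / real m"
    using assms by (intro add_left_mono divide_right_mono mult_left_mono) auto
qed (use assms in auto)

lemma uniform_partition_fine_coarse:
  assumes "a \<le> b"
  shows "fine_tagged_partition (b - a + 1) a b (Suc m) (uniform_partition a b (Suc m)) (uniform_partition a b (Suc m))"
proof (rule uniform_partition_fine[OF assms])
  have "(b - a) / real (Suc m) \<le> (b - a) / 1"
    using assms by (intro divide_left_mono) auto
  then show "(b - a) / real (Suc m) < b - a + 1" by simp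
qed simp

lemma eventually_uniform_partition_fine:
  assumes "a \<le> b" "\<delta> > 0"
  shows "eventually (\<lambda>m. fine_tagged_partition \<delta> a b (Suc m)
           (uniform_partition a b (Suc m)) (uniform_partition a b (Suc m))) sequentially"
proof -
  obtain N :: nat where N: "(b - a) / \<delta> < real N" using reals_Archimedean2 by blast
  have "(b - a) / real (Suc m) < \<delta>" if "N \<le> m" for m
  proof -
    have "\<delta> * real N \<le> \<delta> * real (Suc m)"
      using that assms by (intro mult_left_mono) auto
    then have "b - a < \<delta> * real (Suc m)"
      using N assms by (simp add: field_simps)
    then show ?thesis by (simp add: field_simps)
  qed
  then show ?thesis
    unfolding eventually_sequentially using uniform_partition_fine[OF assms(1)] by (metis le_add1 plus_1_eq_Suc)
qed

lemma has_RS_integral_uniform_limit: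
  assumes "has_RS_integral f g a b I" "a \<le> b"
  shows "(\<lambda>m. uniform_RS_sum f g a b (Suc m)) \<longlonglongrightarrow> I"
proof (rule tendstoI)
  fix \<epsilon> :: real assume "\<epsilon> > 0"
  then obtain \<delta> where "\<delta> > 0" and \<delta>: "\<And>m t s. fine_tagged_partition \<delta> a b m t s \<Longrightarrow> \<bar>RS_sum f g m t s - I\<bar> < \<epsilon>"
    using assms(1) unfolding has_RS_integral_iff_fine by blast
  show "eventually (\<lambda>m. dist (uniform_RS_sum f g a b (Suc m)) I < \<epsilon>) sequentially"
    using eventually_uniform_partition_fine[OF assms(2) \<open>\<delta> > 0\<close>]
    by eventually_elim (simp add: uniform_RS_sum_def dist_real_def \<delta>)
qed

lemma has_RS_integral_unique:
  assumes "has_RS_integral f g a b I" "has_RS_integral f g a b I'" "a \<le> b"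
  shows "I = I'"
  using has_RS_integral_uniform_limit[OF assms(1,3)] has_RS_integral_uniform_limit[OF assms(2,3)]
  by (rule LIMSEQ_unique)

lemma RS_integral_unique:
  assumes "has_RS_integral f g a b I" "a \<le> b"
  shows "RS_integral f g a b = I"
  unfolding RS_integral_def using has_RS_integral_unique assms by blast

text \<open>The mesh bound \<open>b - a + 1\<close> only serves to admit all uniform partitions, whose sums
  converge to the integral.\<close>
lemma has_RS_integral_bound:
  assumes "has_RS_integral f g a b I" "a \<le> b"
    and "\<And>m t. fine_tagged_partition (b - a + 1) a b m t t \<Longrightarrow> \<bar>RS_sum f g m t t - c\<bar> \<le> B"
  shows "\<bar>I - c\<bar> \<le> B"
proof (rule tendsto_upperbound)
  show "(\<lambda>m. \<bar>uniform_RS_sum f g a b (Suc m) - c\<bar>) \<longlonglongrightarrow> \<bar>I - c\<bar>"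
    by (intro tendsto_intros has_RS_integral_uniform_limit assms)
  show "eventually (\<lambda>m. \<bar>uniform_RS_sum f g a b (Suc m) - c\<bar> \<le> B) sequentially"
    unfolding uniform_RS_sum_def using assms(3)[OF uniform_partition_fine_coarse[OF assms(2)]] by simp
qed simp

lemma increments_dominated_mono:
  assumes "increments_dominated g W a b" "a \<le> u" "u \<le> v" "v \<le> b"
  shows "W u \<le> W v"
  using assms unfolding increments_dominated_def by (meson abs_ge_zero order_trans diff_ge_0_iff_ge)

lemma increments_dominated_subinterval:
  "increments_dominated g W a b \<Longrightarrow> a \<le> u \<Longrightarrow> v \<le> b \<Longrightarrow> increments_dominated g W u v"
  unfolding increments_dominated_def by auto

lemma continuous_on_interval_modulus:
  fixes f :: "real \<Rightarrow> real"
  assumes "continuous_on {a..b} f" "\<eta> > 0"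
  obtains \<delta> where "\<delta> > 0" "\<And>u v. u \<in> {a..b} \<Longrightarrow> v \<in> {a..b} \<Longrightarrow> \<bar>u - v\<bar> < 2 * \<delta> \<Longrightarrow> \<bar>f u - f v\<bar> \<le> \<eta>"
proof -
  have "uniformly_continuous_on {a..b} f"
    using assms(1) by (rule compact_uniformly_continuous) simp
  then obtain d where "d > 0" and d: "\<And>u v. u \<in> {a..b} \<Longrightarrow> v \<in> {a..b} \<Longrightarrow> dist v u < d \<Longrightarrow> dist (f v) (f u) < \<eta>"
    unfolding uniformly_continuous_on_def using assms(2) by metis
  show ?thesis
  proof (rule that[of "d / 2"])
    fix u v assume "u \<in> {a..b}" "v \<in> {a..b}" "\<bar>u - v\<bar> < 2 * (d / 2)"
    then show "\<bar>f u - f v\<bar> \<le> \<eta>"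
      using d[of v u] by (simp add: dist_real_def)
  qed (use \<open>d > 0\<close> in simp)
qed

lemma fine_RS_sums_close_to_uniform:
  fixes f :: "real \<Rightarrow> real"
  assumes ab: "a \<le> b" and f: "continuous_on {a..b} f" and D: "increments_dominated g W a b"
    and "\<epsilon> > 0"
  obtains \<delta> where "\<delta> > 0" "eventually (\<lambda>m. \<forall>k t s. fine_tagged_partition \<delta> a b k t s \<longrightarrow>
      \<bar>RS_sum f g k t s - uniform_RS_sum f g a b (Suc m)\<bar> \<le> \<epsilon>) sequentially"
proof -
  define \<eta> where "\<eta> = \<epsilon> / (W b - W a + 1)"
  have "W b - W a \<ge> 0" using increments_dominated_mono[OF D] ab by auto
  then have "\<eta> > 0" "\<eta> * (W b - W a) \<le> \<epsilon>"
    using \<open>\<epsilon> > 0\<close> by (auto simp: \<eta>_def field_simps)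
  obtain \<delta> where "\<delta> > 0" and \<delta>: "\<And>u v. u \<in> {a..b} \<Longrightarrow> v \<in> {a..b} \<Longrightarrow> \<bar>u - v\<bar> < 2 * \<delta> \<Longrightarrow> \<bar>f u - f v\<bar> \<le> \<eta>"
    using continuous_on_interval_modulus[OF f \<open>\<eta> > 0\<close>] by blast
  have "eventually (\<lambda>m. \<forall>k t s. fine_tagged_partition \<delta> a b k t s \<longrightarrow>
      \<bar>RS_sum f g k t s - uniform_RS_sum f g a b (Suc m)\<bar> \<le> \<epsilon>) sequentially"
    using eventually_uniform_partition_fine[OF ab \<open>\<delta> > 0\<close>]
  proof eventually_elim
    case (elim m)
    show ?case
    proof (intro allI impI)
      fix k t s assume "fine_tagged_partition \<delta> a b k t s"
      then have "\<bar>RS_sum f g k t s - uniform_RS_sum f g a b (Suc m)\<bar> \<le> \<eta> * (W b - W a)"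
        unfolding uniform_RS_sum_def using RS_sum_diff_le[OF _ elim D \<delta>] \<open>\<eta> > 0\<close> by simp
      then show "\<bar>RS_sum f g k t s - uniform_RS_sum f g a b (Suc m)\<bar> \<le> \<epsilon>"
        using \<open>\<eta> * (W b - W a) \<le> \<epsilon>\<close> by linarith
    qed
  qed
  with \<open>\<delta> > 0\<close> that show ?thesis by blast
qed

lemma Cauchy_uniform_RS_sum:
  fixes f :: "real \<Rightarrow> real"
  assumes ab: "a \<le> b" and f: "continuous_on {a..b} f" and D: "increments_dominated g W a b"
  shows "Cauchy (\<lambda>m. uniform_RS_sum f g a b (Suc m))"
proof (rule metric_CauchyI)
  fix \<epsilon> :: real assume "\<epsilon> > 0"
  then obtain \<delta> where "\<delta> > 0" and close: "eventually (\<lambda>m. \<forall>k t s. fine_tagged_partition \<delta> a b k t s \<longrightarrow>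
      \<bar>RS_sum f g k t s - uniform_RS_sum f g a b (Suc m)\<bar> \<le> \<epsilon> / 2) sequentially"
    using fine_RS_sums_close_to_uniform[OF ab f D, of "\<epsilon> / 2"] by auto
  from eventually_conj[OF close eventually_uniform_partition_fine[OF ab \<open>\<delta> > 0\<close>]]
  obtain N where N: "\<And>m. m \<ge> N \<Longrightarrow> (\<forall>k t s. fine_tagged_partition \<delta> a b k t s \<longrightarrow>
      \<bar>RS_sum f g k t s - uniform_RS_sum f g a b (Suc m)\<bar> \<le> \<epsilon> / 2) \<and>
      fine_tagged_partition \<delta> a b (Suc m) (uniform_partition a b (Suc m)) (uniform_partition a b (Suc m))"
    unfolding eventually_sequentially by blast
  have "dist (uniform_RS_sum f g a b (Suc m)) (uniform_RS_sum f g a b (Suc n)) < \<epsilon>"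
    if "m \<ge> N" "n \<ge> N" for m n
  proof -
    have "\<bar>uniform_RS_sum f g a b (Suc n) - uniform_RS_sum f g a b (Suc m)\<bar> \<le> \<epsilon> / 2"
      using N[OF that(1)] N[OF that(2)] unfolding uniform_RS_sum_def by blast
    then show ?thesis using \<open>\<epsilon> > 0\<close> by (simp add: dist_real_def abs_minus_commute)
  qed
  then show "\<exists>N. \<forall>m\<ge>N. \<forall>n\<ge>N. dist (uniform_RS_sum f g a b (Suc m)) (uniform_RS_sum f g a b (Suc n)) < \<epsilon>"
    by blast
qed

lemma has_RS_integral_RS_integral:
  fixes f :: "real \<Rightarrow> real"
  assumes ab: "a \<le> b" and f: "continuous_on {a..b} f" and D: "increments_dominated g W a b"
  shows "has_RS_integral f g a b (RS_integral f g a b)"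
proof -
  obtain I where I: "(\<lambda>m. uniform_RS_sum f g a b (Suc m)) \<longlonglongrightarrow> I"
    using Cauchy_uniform_RS_sum[OF assms] Cauchy_convergent_iff convergent_def by blast
  have "has_RS_integral f g a b I"
    unfolding has_RS_integral_iff_fine
  proof (intro allI impI)
    fix \<epsilon> :: real assume "\<epsilon> > 0"
    then obtain \<delta> where "\<delta> > 0" and close: "eventually (\<lambda>m. \<forall>k t s. fine_tagged_partition \<delta> a b k t s \<longrightarrow>
        \<bar>RS_sum f g k t s - uniform_RS_sum f g a b (Suc m)\<bar> \<le> \<epsilon> / 2) sequentially"
      using fine_RS_sums_close_to_uniform[OF assms, of "\<epsilon> / 2"] by auto
    have "\<bar>RS_sum f g k t s - I\<bar> \<le> \<epsilon> / 2" if "fine_tagged_partition \<delta> a b k t s" for k t s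
      by (rule tendsto_upperbound[of "\<lambda>m. \<bar>RS_sum f g k t s - uniform_RS_sum f g a b (Suc m)\<bar>"])
        (use close that in \<open>auto intro!: tendsto_intros I elim: eventually_mono\<close>)
    then show "\<exists>\<delta>>0. \<forall>k t s. fine_tagged_partition \<delta> a b k t s \<longrightarrow> \<bar>RS_sum f g k t s - I\<bar> < \<epsilon>"
      using \<open>\<delta> > 0\<close> \<open>\<epsilon> > 0\<close> by force
  qed
  then show ?thesis using RS_integral_unique ab by simp
qed

lemma sum_lessThan_add: "(\<Sum>i<m1 + m2. F i) = (\<Sum>i<m1. F i) + (\<Sum>i<(m2::nat). F (m1 + i))"
  by (induction m2) (auto simp: add.assoc)

lemma fine_tagged_partition_append:
  assumes P1: "fine_tagged_partition \<delta> a c m1 t1 s1" and P2: "fine_tagged_partition \<delta> c b m2 t2 s2"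
  obtains t s where "fine_tagged_partition \<delta> a b (m1 + m2) t s"
    and "RS_sum f g (m1 + m2) t s = RS_sum f g m1 t1 s1 + RS_sum f g m2 t2 s2"
proof -
  define t where "t i = (if i \<le> m1 then t1 i else t2 (i - m1))" for i
  define s where "s i = (if i < m1 then s1 i else s2 (i - m1))" for i
  have ends: "t1 m1 = c" "t2 0 = c" "t1 0 = a" "t2 m2 = b"
    using P1 P2 unfolding fine_tagged_partition_def by auto
  have t2: "t (m1 + i) = t2 i" for i using ends by (cases i) (auto simp: t_def)
  have t1: "i \<le> m1 \<Longrightarrow> t i = t1 i" for i by (simp add: t_def)
  have "t i \<le> s i \<and> s i \<le> t (Suc i) \<and> t (Suc i) - t i < \<delta>" if i: "i < m1 + m2" for i
  proof (cases "i < m1")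
    case True
    then show ?thesis using fine_tagged_partition_tag[OF P1 True] t1[of i] t1[of "Suc i"] by (simp add: s_def)
  next
    case False
    then obtain j where j: "i = m1 + j" "j < m2" using i by (metis add_less_imp_less_left le_Suc_ex not_less)
    then show ?thesis using fine_tagged_partition_tag[OF P2 j(2)] t2[of j] t2[of "Suc j"] by (simp add: s_def)
  qed
  moreover have "t 0 = a" "t (m1 + m2) = b" using ends t2[of m2] by (simp_all add: t_def)
  ultimately have "fine_tagged_partition \<delta> a b (m1 + m2) t s"
    unfolding fine_tagged_partition_def by blast
  moreover have "RS_sum f g (m1 + m2) t s = RS_sum f g m1 t1 s1 + RS_sum f g m2 t2 s2"
    unfolding RS_sum_def sum_lessThan_add
    using t1 t2 by (intro arg_cong2[where f="(+)"] sum.cong) (auto simp: s_def simp flip: add_Suc_right)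
  ultimately show ?thesis by (rule that)
qed

lemma has_RS_integral_combine:
  assumes "a \<le> c" "c \<le> b"
    and "has_RS_integral f g a c I1" "has_RS_integral f g c b I2" "has_RS_integral f g a b I"
  shows "I = I1 + I2"
proof -
  have close: "\<bar>I - (I1 + I2)\<bar> < 3 * \<epsilon>" if "\<epsilon> > 0" for \<epsilon>
  proof -
    obtain \<delta>1 where "\<delta>1 > 0"
      and \<delta>1: "\<And>m t s. fine_tagged_partition \<delta>1 a c m t s \<Longrightarrow> \<bar>RS_sum f g m t s - I1\<bar> < \<epsilon>"
      using assms(3) \<open>\<epsilon> > 0\<close> unfolding has_RS_integral_iff_fine by blast
    obtain \<delta>2 where "\<delta>2 > 0"
      and \<delta>2: "\<And>m t s. fine_tagged_partition \<delta>2 c b m t s \<Longrightarrow> \<bar>RS_sum f g m t s - I2\<bar> < \<epsilon>"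
      using assms(4) \<open>\<epsilon> > 0\<close> unfolding has_RS_integral_iff_fine by blast
    obtain \<delta> where "\<delta> > 0"
      and \<delta>: "\<And>m t s. fine_tagged_partition \<delta> a b m t s \<Longrightarrow> \<bar>RS_sum f g m t s - I\<bar> < \<epsilon>"
      using assms(5) \<open>\<epsilon> > 0\<close> unfolding has_RS_integral_iff_fine by blast
    define \<delta>' where "\<delta>' = min \<delta> (min \<delta>1 \<delta>2)"
    have "\<delta>' > 0" using \<open>\<delta> > 0\<close> \<open>\<delta>1 > 0\<close> \<open>\<delta>2 > 0\<close> by (simp add: \<delta>'_def)
    have "\<exists>m t s. fine_tagged_partition \<delta>' u v m t s" if uv: "u \<le> v" for u v
    proof -
      obtain N where "fine_tagged_partition \<delta>' u v (Suc N) (uniform_partition u v (Suc N)) (uniform_partition u v (Suc N))"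
        using eventually_uniform_partition_fine[OF uv \<open>\<delta>' > 0\<close>] unfolding eventually_sequentially by blast
      then show ?thesis by blast
    qed
    then obtain m1 t1 s1 m2 t2 s2 where P1: "fine_tagged_partition \<delta>' a c m1 t1 s1"
      and P2: "fine_tagged_partition \<delta>' c b m2 t2 s2"
      using assms(1,2) by meson
    obtain t s where P: "fine_tagged_partition \<delta>' a b (m1 + m2) t s"
      and sum: "RS_sum f g (m1 + m2) t s = RS_sum f g m1 t1 s1 + RS_sum f g m2 t2 s2"
      using fine_tagged_partition_append[OF P1 P2] by blast
    have "\<delta>' \<le> \<delta>" "\<delta>' \<le> \<delta>1" "\<delta>' \<le> \<delta>2" by (simp_all add: \<delta>'_def)
    then have "\<bar>RS_sum f g m1 t1 s1 - I1\<bar> < \<epsilon>" "\<bar>RS_sum f g m2 t2 s2 - I2\<bar> < \<epsilon>"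
      "\<bar>RS_sum f g m1 t1 s1 + RS_sum f g m2 t2 s2 - I\<bar> < \<epsilon>"
      using \<delta>1[OF fine_tagged_partition_mono_delta[OF P1]] \<delta>2[OF fine_tagged_partition_mono_delta[OF P2]]
        \<delta>[OF fine_tagged_partition_mono_delta[OF P]] unfolding sum by blast+
    then show ?thesis by linarith
  qed
  have "\<bar>I - (I1 + I2)\<bar> \<le> 0 + \<epsilon>" if "\<epsilon> > 0" for \<epsilon>
    using close[of "\<epsilon> / 3"] that by simp
  then have "\<bar>I - (I1 + I2)\<bar> \<le> 0" by (rule field_le_epsilon)
  then show ?thesis by simp
qed

lemma RS_sum_near_const:
  assumes P: "fine_tagged_partition \<delta> u v m t s" and D: "increments_dominated g W u v"
    and f: "\<And>x. x \<in> {u..v} \<Longrightarrow> \<bar>f x - c\<bar> \<le> \<eta>"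
  shows "\<bar>RS_sum f g m t s - c * (g v - g u)\<bar> \<le> \<eta> * (W v - W u)"
proof -
  have "RS_sum f g m t s - c * (g v - g u) = (\<Sum>i<m. (f (s i) - c) * (g (t (Suc i)) - g (t i)))"
    unfolding RS_sum_def sum_increments_telescope[OF P, of g, symmetric]
    by (simp add: sum_distrib_left sum_subtractf[symmetric] left_diff_distrib)
  also have "\<bar>\<dots>\<bar> \<le> (\<Sum>i<m. \<eta> * (W (t (Suc i)) - W (t i)))"
  proof (rule order_trans[OF sum_abs], rule sum_mono)
    fix i assume "i \<in> {..<m}"
    then have i: "i < m" by simp
    note ti = fine_tagged_partition_tag[OF P i]
    have "u \<le> t i" "t (Suc i) \<le> v" using fine_tagged_partition_bounds[OF P] i by auto
    then have "\<bar>g (t (Suc i)) - g (t i)\<bar> \<le> W (t (Suc i)) - W (t i)" "\<bar>f (s i) - c\<bar> \<le> \<eta>"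
      using D f ti unfolding increments_dominated_def by auto
    then show "\<bar>(f (s i) - c) * (g (t (Suc i)) - g (t i))\<bar> \<le> \<eta> * (W (t (Suc i)) - W (t i))"
      unfolding abs_mult by (intro mult_mono) auto
  qed
  also have "\<dots> = \<eta> * (W v - W u)"
    by (simp add: sum_distrib_left[symmetric] sum_increments_telescope[OF P])
  finally show ?thesis .
qed

lemma has_RS_integral_subinterval:
  fixes f :: "real \<Rightarrow> real"
  assumes "a \<le> u" "u \<le> v" "v \<le> b" "continuous_on {a..b} f" "increments_dominated g W a b"
  shows "has_RS_integral f g u v (RS_integral f g u v)"
  using assms increments_dominated_subinterval[OF assms(5), of u v]
  by (intro has_RS_integral_RS_integral continuous_on_subset[OF assms(4)]) auto

lemma RS_integral_diff:
  fixes f :: "real \<Rightarrow> real"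
  assumes "a \<le> u" "u \<le> v" "v \<le> b" "continuous_on {a..b} f" "increments_dominated g W a b"
  shows "RS_integral f g a v - RS_integral f g a u = RS_integral f g u v"
proof -
  have "has_RS_integral f g a u (RS_integral f g a u)" "has_RS_integral f g u v (RS_integral f g u v)"
    "has_RS_integral f g a v (RS_integral f g a v)"
    using assms by (auto intro: has_RS_integral_subinterval[OF _ _ _ assms(4,5)])
  from has_RS_integral_combine[OF assms(1,2) this] show ?thesis by simp
qed

lemma RS_integral_increment_le:
  fixes f :: "real \<Rightarrow> real"
  assumes uv: "a \<le> u" "u \<le> v" "v \<le> b" and f: "continuous_on {a..b} f" and D: "increments_dominated g W a b"
    and near: "\<And>x. x \<in> {u..v} \<Longrightarrow> \<bar>f x - f u\<bar> \<le> \<eta>" and "\<eta> \<ge> 0"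
  shows "\<bar>RS_integral f g a v - RS_integral f g a u\<bar> \<le> \<bar>f u\<bar> * \<bar>g v - g u\<bar> + \<eta> * (W b - W a)"
proof -
  have "increments_dominated g W u v"
    using increments_dominated_subinterval[OF D] uv by auto
  then have "\<bar>RS_integral f g u v - f u * (g v - g u)\<bar> \<le> \<eta> * (W v - W u)"
    by (intro has_RS_integral_bound[OF has_RS_integral_subinterval[OF uv f D] \<open>u \<le> v\<close>]
        RS_sum_near_const[OF _ _ near])
  moreover have "\<eta> * (W v - W u) \<le> \<eta> * (W b - W a)"
    using increments_dominated_mono[OF D, of a u] increments_dominated_mono[OF D, of v b] uv \<open>\<eta> \<ge> 0\<close>
    by (intro mult_left_mono) auto
  moreover have "\<bar>RS_integral f g u v\<bar> \<le> \<bar>RS_integral f g u v - f u * (g v - g u)\<bar> + \<bar>f u\<bar> * \<bar>g v - g u\<bar>"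
    using abs_triangle_ineq[of "RS_integral f g u v - f u * (g v - g u)" "f u * (g v - g u)"]
    by (simp add: abs_mult)
  ultimately show ?thesis
    unfolding RS_integral_diff[OF uv f D] by linarith
qed

lemma RS_integral_upper_modulus:
  fixes f :: "real \<Rightarrow> real"
  assumes f: "continuous_on {a..b} f" and D: "increments_dominated g W a b"
    and B: "\<And>x. x \<in> {a..b} \<Longrightarrow> \<bar>f x\<bar> \<le> B" and "\<eta> > 0"
  obtains \<delta> where "\<delta> > 0" "\<And>x y. x \<in> {a..b} \<Longrightarrow> y \<in> {a..b} \<Longrightarrow> \<bar>y - x\<bar> < \<delta> \<Longrightarrow>
      \<bar>RS_integral f g a y - RS_integral f g a x\<bar> \<le> B * \<bar>g y - g x\<bar> + \<eta> * (W b - W a)"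
proof -
  obtain \<delta> where "\<delta> > 0" and \<delta>: "\<And>u v. u \<in> {a..b} \<Longrightarrow> v \<in> {a..b} \<Longrightarrow> \<bar>u - v\<bar> < 2 * \<delta> \<Longrightarrow> \<bar>f u - f v\<bar> \<le> \<eta>"
    using continuous_on_interval_modulus[OF f \<open>\<eta> > 0\<close>] by blast
  have "\<bar>RS_integral f g a y - RS_integral f g a x\<bar> \<le> B * \<bar>g y - g x\<bar> + \<eta> * (W b - W a)"
    if x: "x \<in> {a..b}" and y: "y \<in> {a..b}" "\<bar>y - x\<bar> < \<delta>" for x y
  proof -
    define u v where "u = min x y" and "v = max x y"
    have uv: "a \<le> u" "u \<le> v" "v \<le> b" using x y unfolding u_def v_def by auto
    have "\<bar>f z - f u\<bar> \<le> \<eta>" if "z \<in> {u..v}" for z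
      using \<delta> that uv y \<open>\<delta> > 0\<close> unfolding u_def v_def by (auto simp: min_def max_def split: if_splits)
    then have "\<bar>RS_integral f g a v - RS_integral f g a u\<bar> \<le> \<bar>f u\<bar> * \<bar>g v - g u\<bar> + \<eta> * (W b - W a)"
      using \<open>\<eta> > 0\<close> by (intro RS_integral_increment_le[OF uv f D]) auto
    also have "\<dots> \<le> B * \<bar>g v - g u\<bar> + \<eta> * (W b - W a)"
      using B uv by (intro add_right_mono mult_right_mono) auto
    finally show ?thesis
      unfolding u_def v_def by (auto simp: min_def max_def abs_minus_commute split: if_splits)
  qed
  with \<open>\<delta> > 0\<close> that show ?thesis by blast
qed

lemma continuous_on_RS_integral_upper:
  fixes f g :: "real \<Rightarrow> real"
  assumes "a \<le> b" and f: "continuous_on {a..b} f" and g: "continuous_on {a..b} g"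
    and D: "increments_dominated g W a b"
  shows "continuous_on {a..b} (\<lambda>t. RS_integral f g a t)"
  unfolding continuous_on_iff
proof (intro ballI allI impI)
  fix x \<epsilon> :: real assume x: "x \<in> {a..b}" and "\<epsilon> > 0"
  obtain B where "\<forall>y\<in>f ` {a..b}. \<bar>y\<bar> \<le> B"
    using compact_imp_bounded[OF compact_continuous_image[OF f]] unfolding bounded_real by blast
  then have B: "\<And>x. x \<in> {a..b} \<Longrightarrow> \<bar>f x\<bar> \<le> B" by blast
  then have "B \<ge> 0" using x by force
  define \<eta> where "\<eta> = \<epsilon> / (2 * (W b - W a + 1))"
  have "W b - W a \<ge> 0" using increments_dominated_mono[OF D] \<open>a \<le> b\<close> by auto
  then have "\<eta> > 0" "\<eta> * (W b - W a) < \<epsilon> / 2"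
    using \<open>\<epsilon> > 0\<close> by (auto simp: \<eta>_def field_simps)
  obtain \<delta>1 where "\<delta>1 > 0" and \<delta>1: "\<And>x y. x \<in> {a..b} \<Longrightarrow> y \<in> {a..b} \<Longrightarrow> \<bar>y - x\<bar> < \<delta>1 \<Longrightarrow>
      \<bar>RS_integral f g a y - RS_integral f g a x\<bar> \<le> B * \<bar>g y - g x\<bar> + \<eta> * (W b - W a)"
    using RS_integral_upper_modulus[OF f D B \<open>\<eta> > 0\<close>] by blast
  define \<epsilon>' where "\<epsilon>' = \<epsilon> / (2 * (B + 1))"
  have "\<epsilon>' > 0" "B * \<epsilon>' < \<epsilon> / 2"
    using \<open>\<epsilon> > 0\<close> \<open>B \<ge> 0\<close> by (auto simp: \<epsilon>'_def field_simps)
  obtain \<delta>2 where "\<delta>2 > 0" and \<delta>2: "\<And>y. y \<in> {a..b} \<Longrightarrow> dist y x < \<delta>2 \<Longrightarrow> dist (g y) (g x) < \<epsilon>'"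
    using g x \<open>\<epsilon>' > 0\<close> unfolding continuous_on_iff by blast
  have "\<bar>RS_integral f g a y - RS_integral f g a x\<bar> < \<epsilon>"
    if y: "y \<in> {a..b}" "\<bar>y - x\<bar> < min \<delta>1 \<delta>2" for y
  proof -
    have "\<bar>g y - g x\<bar> < \<epsilon>'" using \<delta>2[of y] y by (simp add: dist_real_def)
    then have "B * \<bar>g y - g x\<bar> \<le> B * \<epsilon>'" using \<open>B \<ge> 0\<close> by (intro mult_left_mono) auto
    then show ?thesis
      using \<delta>1[OF x y(1)] y \<open>\<eta> * (W b - W a) < \<epsilon> / 2\<close> \<open>B * \<epsilon>' < \<epsilon> / 2\<close> by fastforce
  qed
  then show "\<exists>d>0. \<forall>y\<in>{a..b}. dist y x < d \<longrightarrow> dist (RS_integral f g a y) (RS_integral f g a x) < \<epsilon>"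
    using \<open>\<delta>1 > 0\<close> \<open>\<delta>2 > 0\<close> by (intro exI[of _ "min \<delta>1 \<delta>2"]) (auto simp: dist_real_def)
qed

lemma power_div_fact_increment_le:
  fixes x y :: real
  assumes "0 \<le> x" "x \<le> y"
  shows "x ^ k / fact k * (y - x) \<le> y ^ Suc k / fact (Suc k) - x ^ Suc k / fact (Suc k)"
proof -
  have "(\<Sum>i<Suc k. x ^ k) \<le> (\<Sum>i<Suc k. x ^ (Suc k - Suc i) * y ^ i)"
  proof (rule sum_mono)
    fix i assume "i \<in> {..<Suc k}"
    then have "x ^ k = x ^ (k - i) * x ^ i" by (simp add: power_add[symmetric])
    also have "\<dots> \<le> x ^ (k - i) * y ^ i"
      using assms by (intro mult_left_mono power_mono) auto
    finally show "x ^ k \<le> x ^ (Suc k - Suc i) * y ^ i" by simp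
  qed
  then have "real (Suc k) * x ^ k * (y - x) \<le> y ^ Suc k - x ^ Suc k"
    unfolding power_diff_sumr2[of y "Suc k" x] using assms
    by (simp add: mult_left_mono mult.commute mult.left_commute)
  then have "real (Suc k) * x ^ k * (y - x) / fact (Suc k) \<le> (y ^ Suc k - x ^ Suc k) / fact (Suc k)"
    by (intro divide_right_mono) auto
  also have "real (Suc k) * x ^ k * (y - x) / fact (Suc k) = x ^ k / fact k * (y - x)"
    by (simp add: fact_Suc del: of_nat_Suc)
  finally show ?thesis by (simp add: diff_divide_distrib)
qed

lemma power_div_fact_le_exp:
  fixes x :: real
  assumes "0 \<le> x"
  shows "x ^ n / fact n \<le> exp x"
proof -
  have "summable (\<lambda>k. x ^ k / fact k)"
    using summable_exp[of x] by (simp add: inverse_eq_divide mult.commute)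
  then have "(\<Sum>k\<in>{n}. x ^ k / fact k) \<le> (\<Sum>k. x ^ k / fact k)"
    by (rule sum_le_suminf) (use assms in auto)
  also have "\<dots> = exp x" by (simp add: exp_def inverse_eq_divide field_simps)
  finally show ?thesis by simp
qed

text \<open>The left endpoint tags are essential here: the bound on \<open>f\<close> grows with \<open>W\<close>.\<close>
lemma RS_sum_factorial_bound:
  assumes P: "fine_tagged_partition \<delta> a b m t t" and D: "increments_dominated g W a b"
    and f: "\<And>x. x \<in> {a..b} \<Longrightarrow> \<bar>f x\<bar> \<le> (W x - W a) ^ k / fact k"
  shows "\<bar>RS_sum f g m t t\<bar> \<le> (W b - W a) ^ Suc k / fact (Suc k)"
proof -
  define h where "h x = (W x - W a) ^ Suc k / fact (Suc k)" for x
  have "\<bar>RS_sum f g m t t\<bar> \<le> (\<Sum>i<m. h (t (Suc i)) - h (t i))"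
    unfolding RS_sum_def
  proof (rule order_trans[OF sum_abs], rule sum_mono)
    fix i assume "i \<in> {..<m}"
    then have i: "i < m" by simp
    note ti = fine_tagged_partition_tag[OF P i]
    have bounds: "a \<le> t i" "t (Suc i) \<le> b" using fine_tagged_partition_bounds[OF P] i by auto
    have g: "\<bar>g (t (Suc i)) - g (t i)\<bar> \<le> W (t (Suc i)) - W (t i)"
      using D bounds ti unfolding increments_dominated_def by auto
    have W: "0 \<le> W (t i) - W a" "W (t i) - W a \<le> W (t (Suc i)) - W a"
      using increments_dominated_mono[OF D] bounds ti by auto
    have "\<bar>f (t i) * (g (t (Suc i)) - g (t i))\<bar> \<le> (W (t i) - W a) ^ k / fact k * (W (t (Suc i)) - W (t i))"
      unfolding abs_mult using f bounds ti g W by (intro mult_mono) auto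
    also have "\<dots> \<le> h (t (Suc i)) - h (t i)"
      using power_div_fact_increment_le[OF W, of k] unfolding h_def by simp
    finally show "\<bar>f (t i) * (g (t (Suc i)) - g (t i))\<bar> \<le> h (t (Suc i)) - h (t i)" .
  qed
  also have "\<dots> = h b - h a" by (rule sum_increments_telescope[OF P])
  finally show ?thesis unfolding h_def by simp
qed

lemma has_RS_integral_factorial_bound:
  assumes "a \<le> b" "has_RS_integral f g a b I" "increments_dominated g W a b"
    and "\<And>x. x \<in> {a..b} \<Longrightarrow> \<bar>f x\<bar> \<le> (W x - W a) ^ k / fact k"
  shows "\<bar>I\<bar> \<le> (W b - W a) ^ Suc k / fact (Suc k)"
  using has_RS_integral_bound[OF assms(2,1), of 0] RS_sum_factorial_bound[OF _ assms(3,4)] by simp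

section \<open>Signatures of paths with dominated increments\<close>

lemma sig_rev_continuous_bounded:
  fixes Y :: "real \<Rightarrow> nat \<Rightarrow> real"
  assumes "0 \<le> T"
    and Y: "\<And>j. j < d \<Longrightarrow> continuous_on {0..T} (\<lambda>t. Y t j)"
    and D: "\<And>j. j < d \<Longrightarrow> increments_dominated (\<lambda>t. Y t j) W 0 T"
    and "set J \<subseteq> {..<d}"
  shows "continuous_on {0..T} (sig_rev Y J) \<and>
     (\<forall>t\<in>{0..T}. \<bar>sig_rev Y J t\<bar> \<le> (W t - W 0) ^ length J / fact (length J))"
  using \<open>set J \<subseteq> {..<d}\<close>
proof (induction J)
  case Nil
  then show ?case by simp
next
  case (Cons i J)
  then have i: "i < d" and cont: "continuous_on {0..T} (sig_rev Y J)"
    and bound: "\<And>t. t \<in> {0..T} \<Longrightarrow> \<bar>sig_rev Y J t\<bar> \<le> (W t - W 0) ^ length J / fact (length J)"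
    by auto
  have "\<bar>RS_integral (sig_rev Y J) (\<lambda>s. Y s i) 0 t\<bar> \<le> (W t - W 0) ^ Suc (length J) / fact (Suc (length J))"
    if t: "t \<in> {0..T}" for t
  proof (rule has_RS_integral_factorial_bound[where f="sig_rev Y J" and g="\<lambda>s. Y s i" and W=W])
    show "has_RS_integral (sig_rev Y J) (\<lambda>s. Y s i) 0 t (RS_integral (sig_rev Y J) (\<lambda>s. Y s i) 0 t)"
      by (rule has_RS_integral_subinterval[OF _ _ _ cont D[OF i]]) (use t in auto)
    show "increments_dominated (\<lambda>s. Y s i) W 0 t"
      by (rule increments_dominated_subinterval[OF D[OF i]]) (use t in auto)
  qed (use t bound in auto)
  moreover have "continuous_on {0..T} (\<lambda>t. RS_integral (sig_rev Y J) (\<lambda>s. Y s i) 0 t)"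
    by (rule continuous_on_RS_integral_upper[OF \<open>0 \<le> T\<close> cont Y[OF i] D[OF i]])
  ultimately show ?case by simp
qed

lemma sig_rev_measurable:
  fixes Y :: "'a \<Rightarrow> real \<Rightarrow> nat \<Rightarrow> real"
  assumes T: "0 \<le> T"
    and Y: "\<And>\<omega> j. \<omega> \<in> space M \<Longrightarrow> j < d \<Longrightarrow> continuous_on {0..T} (\<lambda>t. Y \<omega> t j)"
    and D: "\<And>\<omega> j. \<omega> \<in> space M \<Longrightarrow> j < d \<Longrightarrow> increments_dominated (\<lambda>t. Y \<omega> t j) (W \<omega>) 0 T"
    and meas: "\<And>t j. j < d \<Longrightarrow> (\<lambda>\<omega>. Y \<omega> t j) \<in> borel_measurable M"
    and "set J \<subseteq> {..<d}" "t \<in> {0..T}"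
  shows "(\<lambda>\<omega>. sig_rev (Y \<omega>) J t) \<in> borel_measurable M"
  using assms(5,6)
proof (induction J arbitrary: t)
  case Nil
  then show ?case by simp
next
  case (Cons i J)
  then have i: "i < d" and t: "t \<in> {0..T}"
    and IH: "\<And>t. t \<in> {0..T} \<Longrightarrow> (\<lambda>\<omega>. sig_rev (Y \<omega>) J t) \<in> borel_measurable M"
    by auto
  have partition_in: "uniform_partition 0 t m l \<in> {0..T}" if "l \<le> m" for m l
  proof -
    have "t * (real l / real m) \<le> t * 1"
      using t that by (intro mult_left_mono) (auto simp: divide_le_eq_1)
    then show ?thesis using t unfolding uniform_partition_def by auto
  qed
  show ?case
  proof (rule borel_measurable_LIMSEQ_real)
    fix \<omega> assume \<omega>: "\<omega> \<in> space M"
    have "continuous_on {0..T} (sig_rev (Y \<omega>) J)"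
      using sig_rev_continuous_bounded[OF T Y[OF \<omega>] D[OF \<omega>]] Cons.prems by auto
    then show "(\<lambda>m. uniform_RS_sum (sig_rev (Y \<omega>) J) (\<lambda>s. Y \<omega> s i) 0 t (Suc m)) \<longlonglongrightarrow> sig_rev (Y \<omega>) (i # J) t"
      unfolding sig_rev.simps using t
      by (intro has_RS_integral_uniform_limit has_RS_integral_subinterval[OF _ _ _ _ D[OF \<omega> i]]) auto
  next
    fix m
    show "(\<lambda>\<omega>. uniform_RS_sum (sig_rev (Y \<omega>) J) (\<lambda>s. Y \<omega> s i) 0 t (Suc m)) \<in> borel_measurable M"
      unfolding uniform_RS_sum_def RS_sum_def
      by (intro borel_measurable_sum borel_measurable_times borel_measurable_diff IH meas i partition_in) auto
  qed
qed

section \<open>Total variation and the time-augmented path\<close>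

lemma euclid_norm_nonneg: "0 \<le> euclid_norm m v"
  unfolding euclid_norm_def by (simp add: sum_nonneg)

lemma abs_component_le_euclid_norm:
  assumes "j < m"
  shows "\<bar>v j\<bar> \<le> euclid_norm m v"
proof -
  have "(v j)\<^sup>2 \<le> (\<Sum>i<m. (v i)\<^sup>2)" by (rule member_le_sum) (use assms in auto)
  then have "sqrt ((v j)\<^sup>2) \<le> sqrt (\<Sum>i<m. (v i)\<^sup>2)" by (rule real_sqrt_le_mono)
  then show ?thesis unfolding euclid_norm_def by simp
qed

lemma variation_sums_nonneg: "\<sigma> \<in> variation_sums m X s \<Longrightarrow> 0 \<le> \<sigma>"
  unfolding variation_sums_def by (auto intro!: sum_nonneg simp: euclid_norm_nonneg)

lemma variation_sums_single:
  "0 \<le> s \<Longrightarrow> euclid_norm m (\<lambda>j. X s j - X 0 j) \<in> variation_sums m X s"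
  unfolding variation_sums_def
  by (rule CollectI, rule exI[of _ 1], rule exI[of _ "\<lambda>i. if i = 0 then 0 else s"]) auto

lemma variation_sums_snoc:
  assumes "\<sigma> \<in> variation_sums m X a" "a \<le> b"
  shows "\<sigma> + euclid_norm m (\<lambda>j. X b j - X a j) \<in> variation_sums m X b"
proof -
  obtain k t where \<sigma>: "\<sigma> = (\<Sum>i<k. euclid_norm m (\<lambda>j. X (t (Suc i)) j - X (t i) j))"
    and t: "t 0 = 0" "t k = a" "\<forall>i<k. t i \<le> t (Suc i)"
    using assms(1) unfolding variation_sums_def by blast
  define t' where "t' i = (if i \<le> k then t i else b)" for i
  have "(\<Sum>i<Suc k. euclid_norm m (\<lambda>j. X (t' (Suc i)) j - X (t' i) j)) = \<sigma> + euclid_norm m (\<lambda>j. X b j - X a j)"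
    unfolding \<sigma> sum.lessThan_Suc using t(2) by (simp add: t'_def)
  moreover have "t' 0 = 0" "t' (Suc k) = b" "\<forall>i<Suc k. t' i \<le> t' (Suc i)"
    using t assms(2) by (auto simp: t'_def less_Suc_eq)
  ultimately show ?thesis unfolding variation_sums_def mem_Collect_eq
    by (intro exI[of _ "Suc k"] exI[of _ t'] conjI) auto
qed

lemma bdd_above_variation_sums:
  assumes "bounded_variation m X T" "s \<le> T"
  shows "bdd_above (variation_sums m X s)"
proof -
  obtain B where B: "\<And>x. x \<in> variation_sums m X T \<Longrightarrow> x \<le> B"
    using assms(1) unfolding bounded_variation_def bdd_above_def by blast
  have "x \<le> B" if "x \<in> variation_sums m X s" for x
    using B[OF variation_sums_snoc[OF that assms(2)]] euclid_norm_nonneg[of m] by (smt (verit))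
  then show ?thesis unfolding bdd_above_def by blast
qed

lemma total_variation_nonneg:
  assumes "bounded_variation m X T" "0 \<le> s" "s \<le> T"
  shows "0 \<le> total_variation m X s"
  unfolding total_variation_def
  using cSup_upper[OF variation_sums_single[OF assms(2)] bdd_above_variation_sums[OF assms(1,3)]]
    variation_sums_nonneg[OF variation_sums_single[OF assms(2)]]
  by (meson order_trans)

lemma total_variation_add_increment_le:
  assumes "bounded_variation m X T" "0 \<le> a" "a \<le> b" "b \<le> T"
  shows "total_variation m X a + euclid_norm m (\<lambda>j. X b j - X a j) \<le> total_variation m X b"
proof -
  have "Sup (variation_sums m X a) \<le> Sup (variation_sums m X b) - euclid_norm m (\<lambda>j. X b j - X a j)"
  proof (rule cSup_least)
    show "variation_sums m X a \<noteq> {}" using variation_sums_single[OF assms(2)] by blast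
    fix \<sigma> assume "\<sigma> \<in> variation_sums m X a"
    then have "\<sigma> + euclid_norm m (\<lambda>j. X b j - X a j) \<le> Sup (variation_sums m X b)"
      by (intro cSup_upper variation_sums_snoc bdd_above_variation_sums[OF assms(1,4)] assms(3))
    then show "\<sigma> \<le> Sup (variation_sums m X b) - euclid_norm m (\<lambda>j. X b j - X a j)" by simp
  qed
  then show ?thesis unfolding total_variation_def by simp
qed

lemma time_aug_increments_dominated:
  assumes X: "bounded_variation (d - 1) X T" and "j < d"
  shows "increments_dominated (\<lambda>t. time_aug d X t j) (\<lambda>s. total_variation (d - 1) X s + s) 0 T"
  unfolding increments_dominated_def
proof (intro allI impI)
  fix u v :: real assume uv: "0 \<le> u" "u \<le> v" "v \<le> T"
  note increment = total_variation_add_increment_le[OF X uv]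
  show "\<bar>time_aug d X v j - time_aug d X u j\<bar> \<le> total_variation (d - 1) X v + v - (total_variation (d - 1) X u + u)"
  proof (cases "j < d - 1")
    case True
    then have "\<bar>X v j - X u j\<bar> \<le> euclid_norm (d - 1) (\<lambda>j. X v j - X u j)"
      using abs_component_le_euclid_norm[of j "d - 1" "\<lambda>j. X v j - X u j"] by simp
    then show ?thesis using True increment uv by (simp add: time_aug_def)
  next
    case False
    then show ?thesis
      using increment uv euclid_norm_nonneg[of "d - 1" "\<lambda>j. X v j - X u j"] by (simp add: time_aug_def)
  qed
qed

lemma time_aug_continuous_on:
  assumes "\<And>j. j < d - 1 \<Longrightarrow> continuous_on {0..T} (\<lambda>t. X t j)"
  shows "continuous_on {0..T} (\<lambda>t. time_aug d X t j)"
  using assms by (cases "j < d - 1") (auto simp: time_aug_def continuous_on_id)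

lemma abs_sig_term_time_aug_le:
  assumes X: "bounded_variation (d - 1) X T" and "0 \<le> T"
    and cont: "\<And>j. j < d - 1 \<Longrightarrow> continuous_on {0..T} (\<lambda>t. X t j)"
    and I: "set I \<subseteq> {..<d}" and "total_variation (d - 1) X T < CX"
  shows "\<bar>sig_term (time_aug d X) T I\<bar> \<le> exp (CX + T)"
proof -
  define W where "W s = total_variation (d - 1) X s + s" for s
  have "0 \<le> W T - W 0"
    using total_variation_add_increment_le[OF X order_refl \<open>0 \<le> T\<close> order_refl]
      euclid_norm_nonneg[of "d - 1" "\<lambda>j. X T j - X 0 j"] \<open>0 \<le> T\<close>
    by (simp add: W_def)
  have "\<bar>sig_rev (time_aug d X) (rev I) T\<bar> \<le> (W T - W 0) ^ length (rev I) / fact (length (rev I))"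
    using sig_rev_continuous_bounded[where Y="time_aug d X" and d=d and W=W and J="rev I", OF \<open>0 \<le> T\<close>
        time_aug_continuous_on[OF cont]] time_aug_increments_dominated[OF X] I \<open>0 \<le> T\<close>
    unfolding W_def by auto
  also have "\<dots> \<le> exp (W T - W 0)"
    by (rule power_div_fact_le_exp) fact
  also have "\<dots> \<le> exp (CX + T)"
    using \<open>total_variation (d - 1) X T < CX\<close> total_variation_nonneg[OF X order_refl \<open>0 \<le> T\<close>]
    unfolding W_def by simp
  finally show ?thesis unfolding sig_term_def .
qed

section \<open>Lattice points in an \<open>\<ell>\<^sub>1\<close>-ball\<close>

definition l1_lattice :: "'v set \<Rightarrow> nat \<Rightarrow> ('v \<Rightarrow> int) set" where
  "l1_lattice F R = {m \<in> PiE F (\<lambda>_. {- int R..int R}). (\<Sum>v\<in>F. nat \<bar>m v\<bar>) \<le> R}"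

lemma finite_l1_lattice: "finite F \<Longrightarrow> finite (l1_lattice F R)"
  unfolding l1_lattice_def by (intro finite_subset[OF _ finite_PiE[of F "\<lambda>_. {- int R..int R}"]]) auto

lemma sum_power_abs_interval:
  fixes q :: real
  assumes "q < 1"
  shows "(\<Sum>j\<in>{- int R..int R}. q ^ nat \<bar>j\<bar>) = (1 + q - 2 * q ^ Suc R) / (1 - q)"
proof (induction R)
  case 0
  then show ?case using assms by (simp add: field_simps)
next
  case (Suc R)
  have "{- int (Suc R)..int (Suc R)} = insert (- int (Suc R)) (insert (int (Suc R)) {- int R..int R})"
    by auto
  then have "(\<Sum>j\<in>{- int (Suc R)..int (Suc R)}. q ^ nat \<bar>j\<bar>) = 2 * q ^ Suc R + (\<Sum>j\<in>{- int R..int R}. q ^ nat \<bar>j\<bar>)"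
    by (simp add: nat_add_distrib)
  also have "\<dots> = (1 + q - 2 * q ^ Suc (Suc R)) / (1 - q)"
    unfolding Suc using assms by (simp add: field_simps)
  finally show ?case .
qed

lemma sum_power_abs_interval_le:
  fixes q :: real
  assumes "0 \<le> q" "q < 1"
  shows "(\<Sum>j\<in>{- int R..int R}. q ^ nat \<bar>j\<bar>) \<le> (1 + q) / (1 - q)"
  unfolding sum_power_abs_interval[OF assms(2)] using assms by (intro divide_right_mono) auto

text \<open>Each point of the lattice has weight \<open>q ^ (\<parallel>m\<parallel>\<^sub>1 - R) \<ge> 1\<close>; summing these weights over the whole
  box makes the sum factorize over the coordinates.\<close>
lemma card_l1_lattice_le_weighted:
  fixes q :: real
  assumes "finite F" "0 < q" "q < 1"
  shows "real (card (l1_lattice F R)) \<le> (1 / q) ^ R * ((1 + q) / (1 - q)) ^ card F"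
proof -
  define Box where "Box = PiE F (\<lambda>_. {- int R..int R})"
  have "real (card (l1_lattice F R)) = (\<Sum>m\<in>l1_lattice F R. 1)" by simp
  also have "\<dots> \<le> (\<Sum>m\<in>l1_lattice F R. (1 / q) ^ R * q ^ (\<Sum>v\<in>F. nat \<bar>m v\<bar>))"
  proof (rule sum_mono)
    fix m assume "m \<in> l1_lattice F R"
    then have "q ^ R \<le> q ^ (\<Sum>v\<in>F. nat \<bar>m v\<bar>)"
      using assms by (intro power_decreasing) (auto simp: l1_lattice_def)
    then show "1 \<le> (1 / q) ^ R * q ^ (\<Sum>v\<in>F. nat \<bar>m v\<bar>)"
      using assms by (simp add: power_divide divide_simps)
  qed
  also have "\<dots> \<le> (\<Sum>m\<in>Box. (1 / q) ^ R * q ^ (\<Sum>v\<in>F. nat \<bar>m v\<bar>))"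
    unfolding Box_def using assms by (intro sum_mono2 finite_PiE) (auto simp: l1_lattice_def)
  also have "\<dots> = (1 / q) ^ R * (\<Sum>m\<in>Box. \<Prod>v\<in>F. q ^ nat \<bar>m v\<bar>)"
    by (simp add: sum_distrib_left power_sum)
  also have "(\<Sum>m\<in>Box. \<Prod>v\<in>F. q ^ nat \<bar>m v\<bar>) = (\<Prod>v\<in>F. \<Sum>j\<in>{- int R..int R}. q ^ nat \<bar>j\<bar>)"
    unfolding Box_def by (rule prod_sum_PiE[symmetric]) (use assms in auto)
  also have "\<dots> \<le> (\<Prod>v\<in>F. (1 + q) / (1 - q))"
    using assms by (intro prod_mono conjI sum_nonneg sum_power_abs_interval_le) auto
  finally show ?thesis using assms by (simp add: mult_left_mono)
qed

lemma card_l1_lattice_le: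
  assumes "finite F" "F \<noteq> {}"
  shows "real (card (l1_lattice F R)) \<le> (exp 1 * (1 + 2 * (real R + 1) / real (card F))) ^ card F"
proof -
  define D where "D = real (card F)"
  have "D > 0" using assms by (simp add: D_def card_gt_0_iff)
  define q where "q = (real R + 1) / (real R + 1 + D)"
  have q: "0 < q" "q < 1" using \<open>D > 0\<close> by (auto simp: q_def)
  have "1 / q = 1 + D / (real R + 1)"
    using \<open>D > 0\<close> by (simp add: q_def field_simps)
  moreover have "0 < 1 + D / (real R + 1)"
    using \<open>D > 0\<close> by (simp add: add_pos_pos)
  ultimately have "(1 / q) ^ R = exp (real R * ln (1 + D / (real R + 1)))"
    by (simp add: exp_of_nat_mult)
  also have "\<dots> \<le> exp (real R * (D / (real R + 1)))"
    using \<open>D > 0\<close> by (intro exp_mono mult_left_mono ln_add_one_self_le_self) auto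
  also have "\<dots> \<le> exp D"
    using \<open>D > 0\<close> by (simp add: field_simps)
  also have "\<dots> = exp 1 ^ card F" unfolding D_def by (simp add: exp_of_nat_mult[symmetric])
  finally have "(1 / q) ^ R \<le> exp 1 ^ card F" .
  moreover have "(1 + q) / (1 - q) = 1 + 2 * (real R + 1) / D"
  proof -
    have pos: "real R + 1 + D > 0" using \<open>D > 0\<close> by simp
    then have e: "1 + q = (2 * (real R + 1) + D) / (real R + 1 + D)" "1 - q = D / (real R + 1 + D)"
      by (simp_all add: q_def field_simps)
    have "(1 + q) / (1 - q) = (2 * (real R + 1) + D) / D"
      unfolding e using pos by (simp add: divide_divide_times_eq)
    also have "\<dots> = 1 + 2 * (real R + 1) / D" using \<open>D > 0\<close> by (simp add: field_simps)
    finally show ?thesis .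
  qed
  ultimately have "(1 / q) ^ R * ((1 + q) / (1 - q)) ^ card F \<le> exp 1 ^ card F * (1 + 2 * (real R + 1) / D) ^ card F"
    using \<open>D > 0\<close> by (simp add: mult_right_mono)
  with card_l1_lattice_le_weighted[OF assms(1) q, of R] show ?thesis
    unfolding D_def power_mult_distrib by (rule order_trans)
qed

section \<open>Hoeffding's inequality for an i.i.d.\ sample\<close>

lemma indep_vars_PiM_components:
  assumes "prob_space M" "I \<noteq> {}"
  shows "prob_space.indep_vars (PiM I (\<lambda>_. M)) (\<lambda>_. M) (\<lambda>i w. w i) I"
proof -
  interpret P: prob_space "PiM I (\<lambda>_. M)" by (rule prob_space_PiM) (use assms in auto)
  have "distr (PiM I (\<lambda>_. M)) (PiM I (\<lambda>_. M)) (\<lambda>x. \<lambda>i\<in>I. x i) = distr (PiM I (\<lambda>_. M)) (PiM I (\<lambda>_. M)) (\<lambda>x. x)"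
    by (rule distr_cong) (auto simp: space_PiM)
  also have "\<dots> = PiM I (\<lambda>i. distr (PiM I (\<lambda>_. M)) M (\<lambda>w. w i))"
    using distr_PiM_component[of I "\<lambda>_. M"] assms by (auto intro: PiM_cong)
  finally show ?thesis
    by (subst P.indep_vars_iff_distr_eq_PiM'[OF assms(2)]) auto
qed

lemma Hoeffding_PiM:
  fixes W :: "'a \<Rightarrow> real"
  assumes "prob_space M" "W \<in> borel_measurable M" "AE \<omega> in M. \<bar>W \<omega>\<bar> \<le> c"
    and "c > 0" "n \<ge> 1" "\<epsilon> \<ge> 0"
  shows "measure (PiM {..<n} (\<lambda>_. M))
           {w \<in> space (PiM {..<n} (\<lambda>_. M)). (\<Sum>i<n. W (w i)) / real n \<ge> (\<integral>\<omega>. W \<omega> \<partial>M) + \<epsilon>}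
         \<le> exp (- (real n * \<epsilon>\<^sup>2) / (2 * c\<^sup>2))"
proof -
  define P where "P = PiM {..<n} (\<lambda>_. M)"
  interpret P: prob_space P unfolding P_def by (rule prob_space_PiM) (use assms(1) in auto)
  have "0 \<in> {..<n}" using assms(5) by auto
  have component: "(\<lambda>w. w i) \<in> measurable P M" if "i < n" for i
    unfolding P_def by (rule measurable_component_singleton) (use that in simp)
  have distr_component: "distr P M (\<lambda>w. w i) = M" if "i < n" for i
    unfolding P_def by (rule distr_PiM_component) (use assms(1) that in auto)
  have distr_W: "distr P borel (\<lambda>w. W (w i)) = distr M borel W" if "i < n" for i
    using distr_distr[OF assms(2) component[OF that]] distr_component[OF that] by (simp add: comp_def)
  have mean: "(\<integral>w. W (w 0) \<partial>P) = (\<integral>\<omega>. W \<omega> \<partial>M)"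
    using integral_distr[OF component assms(2), symmetric] distr_component \<open>0 \<in> {..<n}\<close> by simp
  interpret H: Hoeffding_ineq_iid P "{..<n}" "\<lambda>i w. W (w i)" "\<lambda>w. W (w 0)" "-c" c "\<integral>w. W (w 0) \<partial>P"
  proof unfold_locales
    have "P.indep_vars (\<lambda>_. M) (\<lambda>i w. w i) {..<n}"
      using indep_vars_PiM_components[OF assms(1), of "{..<n}"] \<open>0 \<in> {..<n}\<close> unfolding P_def by auto
    then show "P.indep_vars (\<lambda>_. borel) (\<lambda>i w. W (w i)) {..<n}"
      using assms(2) by (rule P.indep_vars_compose2)
    show "(\<lambda>w. W (w 0)) \<in> borel_measurable P"
      using measurable_compose[OF component assms(2)] \<open>0 \<in> {..<n}\<close> by simp
    have "AE w in P. \<bar>W (w 0)\<bar> \<le> c"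
      unfolding P_def using assms(1,3) \<open>0 \<in> {..<n}\<close> by (intro AE_PiM_component) auto
    then show "AE w in P. W (w 0) \<in> {- c..c}" by (auto simp: abs_le_iff)
  qed (use distr_W \<open>0 \<in> {..<n}\<close> in auto)
  have "P.prob {w \<in> space P. (\<Sum>i\<in>{..<n}. W (w i)) / real (card {..<n}) \<ge> (\<integral>w. W (w 0) \<partial>P) + \<epsilon>}
        \<le> exp (- 2 * real (card {..<n}) * \<epsilon>\<^sup>2 / (c - - c)\<^sup>2)"
    using assms(4,6) \<open>0 \<in> {..<n}\<close> by (intro H.Hoeffding_ineq_ge') auto
  also have "- 2 * real (card {..<n}) * \<epsilon>\<^sup>2 / (c - - c)\<^sup>2 = - (real n * \<epsilon>\<^sup>2) / (2 * c\<^sup>2)"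
    using assms(4) by (simp add: power2_eq_square field_simps)
  finally show ?thesis using mean unfolding P_def by simp
qed

section \<open>The logistic loss\<close>

lemma ln_one_plus_exp_increment:
  fixes a b :: real
  assumes "b \<le> a"
  shows "0 \<le> ln (1 + exp a) - ln (1 + exp b)" "ln (1 + exp a) - ln (1 + exp b) \<le> a - b"
proof -
  show "0 \<le> ln (1 + exp a) - ln (1 + exp b)"
    using assms by (simp add: add_pos_pos)
  have "1 + exp a \<le> exp (a - b) * (1 + exp b)"
    using assms by (simp add: distrib_left exp_diff[symmetric] exp_add[symmetric])
  then have "ln (1 + exp a) \<le> ln (exp (a - b) * (1 + exp b))"
    by (simp add: add_pos_pos)
  also have "\<dots> = (a - b) + ln (1 + exp b)"
    using add_pos_pos[OF zero_less_one exp_gt_zero, of b] by (simp add: ln_mult)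
  finally show "ln (1 + exp a) - ln (1 + exp b) \<le> a - b" by simp
qed

lemma logistic_loss_lipschitz:
  assumes "y \<in> {0, 1}"
  shows "\<bar>logistic_loss y a - logistic_loss y b\<bar> \<le> \<bar>a - b\<bar>"
proof -
  have *: "\<bar>logistic_loss y a - logistic_loss y b\<bar> \<le> a - b" if "b \<le> a" for a b
    using ln_one_plus_exp_increment[OF that] assms unfolding logistic_loss_def by auto
  show ?thesis
    using *[of a b] *[of b a] by (cases "b \<le> a") (auto simp: abs_minus_commute)
qed

section \<open>Logistic regression with bounded features\<close>

locale bounded_logistic_regression =
  fixes M :: "'a measure" and F :: "'v set" and \<phi> :: "'a \<Rightarrow> 'v \<Rightarrow> real" and label :: "'a \<Rightarrow> real"
    and K :: real and n :: nat
  assumes prob_space_M: "prob_space M"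
    and finite_F: "finite F" and F_nonempty: "F \<noteq> {}"
    and \<phi>_measurable: "\<And>v. v \<in> F \<Longrightarrow> (\<lambda>\<omega>. \<phi> \<omega> v) \<in> borel_measurable M"
    and label_measurable: "label \<in> borel_measurable M"
    and label_01: "\<And>\<omega>. \<omega> \<in> space M \<Longrightarrow> label \<omega> \<in> {0, 1}"
    and K_pos: "K > 0"
    and AE_\<phi>_bounded: "AE \<omega> in M. \<forall>v\<in>F. \<bar>\<phi> \<omega> v\<bar> \<le> K"
    and n_pos: "n \<ge> 1"
begin

abbreviation Pn :: "(nat \<Rightarrow> 'a) measure" where
  "Pn \<equiv> PiM {..<n} (\<lambda>_. M)"

definition score :: "'a \<Rightarrow> ('v \<Rightarrow> real) \<Rightarrow> real" where
  "score \<omega> \<theta> = (\<Sum>v\<in>F. \<theta> v * \<phi> \<omega> v)"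

definition loss :: "'a \<Rightarrow> ('v \<Rightarrow> real) \<Rightarrow> real" where
  "loss \<omega> \<theta> = logistic_loss (label \<omega>) (score \<omega> \<theta>)"

definition expected_loss :: "('v \<Rightarrow> real) \<Rightarrow> real" where
  "expected_loss \<theta> = (\<integral>\<omega>. loss \<omega> \<theta> \<partial>M)"

definition deviation :: "(nat \<Rightarrow> 'a) \<Rightarrow> ('v \<Rightarrow> real) \<Rightarrow> real" where
  "deviation w \<theta> = (1 / real n) * (\<Sum>i<n. loss (w i) \<theta>) - expected_loss \<theta>"

definition l1_dist :: "('v \<Rightarrow> real) \<Rightarrow> ('v \<Rightarrow> real) \<Rightarrow> real" where
  "l1_dist a b = (\<Sum>v\<in>F. \<bar>a v - b v\<bar>)"

definition features_bounded :: "'a \<Rightarrow> bool" where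
  "features_bounded \<omega> \<longleftrightarrow> (\<forall>v\<in>F. \<bar>\<phi> \<omega> v\<bar> \<le> K)"

lemma l1_dist_nonneg: "0 \<le> l1_dist a b"
  unfolding l1_dist_def by (simp add: sum_nonneg)

lemma l1_dist_commute: "l1_dist a b = l1_dist b a"
  unfolding l1_dist_def by (simp add: abs_minus_commute)

lemma l1_dist_triangle: "l1_dist a c \<le> l1_dist a b + l1_dist b c"
  unfolding l1_dist_def sum.distrib[symmetric] by (rule sum_mono) auto

lemma score_lipschitz:
  assumes "features_bounded \<omega>"
  shows "\<bar>score \<omega> a - score \<omega> b\<bar> \<le> K * l1_dist a b"
proof -
  have "\<bar>score \<omega> a - score \<omega> b\<bar> \<le> (\<Sum>v\<in>F. \<bar>(a v - b v) * \<phi> \<omega> v\<bar>)"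
    unfolding score_def sum_subtractf[symmetric] left_diff_distrib[symmetric] by (rule sum_abs)
  also have "\<dots> \<le> (\<Sum>v\<in>F. K * \<bar>a v - b v\<bar>)"
  proof (rule sum_mono)
    fix v assume "v \<in> F"
    then have "\<bar>\<phi> \<omega> v\<bar> \<le> K" using assms unfolding features_bounded_def by blast
    from mult_left_mono[OF this abs_ge_zero, of "a v - b v"]
    show "\<bar>(a v - b v) * \<phi> \<omega> v\<bar> \<le> K * \<bar>a v - b v\<bar>" by (simp add: abs_mult mult.commute)
  qed
  finally show ?thesis unfolding l1_dist_def by (simp add: sum_distrib_left)
qed

lemma loss_lipschitz:
  assumes "\<omega> \<in> space M" "features_bounded \<omega>"
  shows "\<bar>loss \<omega> a - loss \<omega> b\<bar> \<le> K * l1_dist a b"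
  using logistic_loss_lipschitz[OF label_01[OF assms(1)]] score_lipschitz[OF assms(2)]
  unfolding loss_def by (meson order_trans)

lemma AE_features_bounded: "AE \<omega> in M. features_bounded \<omega>"
  using AE_\<phi>_bounded unfolding features_bounded_def .

lemma loss_measurable: "(\<lambda>\<omega>. loss \<omega> \<theta>) \<in> borel_measurable M"
  unfolding loss_def logistic_loss_def score_def using \<phi>_measurable label_measurable by measurable

lemma integrable_loss: "integrable M (\<lambda>\<omega>. loss \<omega> \<theta>)"
proof (rule Bochner_Integration.integrable_bound)
  interpret prob_space M by (rule prob_space_M)
  show "integrable M (\<lambda>_. ln 2 + K * l1_dist \<theta> (\<lambda>_. 0))" by simp
  have loss_0: "loss \<omega> (\<lambda>_. 0) = ln 2" for \<omega>
    unfolding loss_def score_def logistic_loss_def by simp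
  show "AE \<omega> in M. norm (loss \<omega> \<theta>) \<le> norm (ln 2 + K * l1_dist \<theta> (\<lambda>_. 0))"
    using AE_features_bounded AE_space
  proof eventually_elim
    case (elim \<omega>)
    then have "\<bar>loss \<omega> \<theta> - ln 2\<bar> \<le> K * l1_dist \<theta> (\<lambda>_. 0)"
      using loss_lipschitz[of \<omega> \<theta> "\<lambda>_. 0"] by (simp add: loss_0)
    moreover have "0 \<le> K * l1_dist \<theta> (\<lambda>_. 0)" using K_pos l1_dist_nonneg by simp
    ultimately show ?case by (simp add: abs_le_iff) (use ln_ge_zero[of 2] in linarith)
  qed
qed (rule loss_measurable)

lemma expected_loss_lipschitz: "\<bar>expected_loss a - expected_loss b\<bar> \<le> K * l1_dist a b"
proof -
  interpret prob_space M by (rule prob_space_M)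
  have "\<bar>expected_loss a - expected_loss b\<bar> = \<bar>\<integral>\<omega>. loss \<omega> a - loss \<omega> b \<partial>M\<bar>"
    unfolding expected_loss_def using integrable_loss by simp
  also have "\<dots> \<le> (\<integral>\<omega>. \<bar>loss \<omega> a - loss \<omega> b\<bar> \<partial>M)"
    using integral_norm_bound[of M "\<lambda>\<omega>. loss \<omega> a - loss \<omega> b"] by simp
  also have "\<dots> \<le> (\<integral>\<omega>. K * l1_dist a b \<partial>M)"
  proof (rule integral_mono_AE)
    show "AE \<omega> in M. \<bar>loss \<omega> a - loss \<omega> b\<bar> \<le> K * l1_dist a b"
      using AE_features_bounded AE_space by eventually_elim (rule loss_lipschitz)
  qed (use integrable_loss in auto)
  finally show ?thesis by (simp add: prob_space)
qed

lemma sample_component_in_space: "w \<in> space Pn \<Longrightarrow> i < n \<Longrightarrow> w i \<in> space M"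
  by (auto simp: space_PiM)

lemma deviation_measurable: "(\<lambda>w. deviation w \<theta>) \<in> borel_measurable Pn"
  unfolding deviation_def using loss_measurable by measurable

lemma AE_sample_features_bounded: "AE w in Pn. \<forall>i<n. features_bounded (w i)"
proof -
  have "AE w in Pn. \<forall>i\<in>{..<n}. features_bounded (w i)"
    using prob_space_M AE_features_bounded by (intro eventually_ball_finite ballI AE_PiM_component) auto
  then show ?thesis by (auto elim: eventually_mono)
qed

lemma deviation_lipschitz:
  assumes "w \<in> space Pn" "\<forall>i<n. features_bounded (w i)"
  shows "\<bar>deviation w a - deviation w b\<bar> \<le> 2 * K * l1_dist a b"
proof -
  have "\<bar>(\<Sum>i<n. loss (w i) a) - (\<Sum>i<n. loss (w i) b)\<bar> \<le> (\<Sum>i<n. \<bar>loss (w i) a - loss (w i) b\<bar>)"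
    unfolding sum_subtractf[symmetric] by (rule sum_abs)
  also have "\<dots> \<le> real n * (K * l1_dist a b)"
    using sum_mono[of "{..<n}" "\<lambda>i. \<bar>loss (w i) a - loss (w i) b\<bar>" "\<lambda>_. K * l1_dist a b"]
      loss_lipschitz sample_component_in_space[OF assms(1)] assms(2) by simp
  finally have "\<bar>(1 / real n) * (\<Sum>i<n. loss (w i) a) - (1 / real n) * (\<Sum>i<n. loss (w i) b)\<bar> \<le> K * l1_dist a b"
    using n_pos by (simp add: right_diff_distrib[symmetric] abs_mult field_simps)
  then show ?thesis
    using expected_loss_lipschitz[of a b] unfolding deviation_def by linarith
qed

lemma prob_deviation_increment_ge:
  assumes "\<delta> > 0" "l1_dist a b \<le> \<delta>" "t \<ge> 0"
  shows "measure Pn {w \<in> space Pn. t \<le> deviation w a - deviation w b}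
           \<le> exp (- (real n * t\<^sup>2) / (2 * K\<^sup>2 * \<delta>\<^sup>2))"
proof -
  interpret prob_space M by (rule prob_space_M)
  define W where "W \<omega> = loss \<omega> a - loss \<omega> b" for \<omega>
  have W_measurable: "W \<in> borel_measurable M" unfolding W_def using loss_measurable by measurable
  have "AE \<omega> in M. \<bar>W \<omega>\<bar> \<le> K * \<delta>"
    using AE_features_bounded AE_space
  proof eventually_elim
    case (elim \<omega>)
    have "\<bar>W \<omega>\<bar> \<le> K * l1_dist a b" unfolding W_def using elim by (intro loss_lipschitz) auto
    also have "\<dots> \<le> K * \<delta>" using assms(2) K_pos by (intro mult_left_mono) auto
    finally show ?case .
  qed
  note Hoeffding = Hoeffding_PiM[OF prob_space_M W_measurable this _ n_pos assms(3)]
  have eq: "deviation w a - deviation w b = (\<Sum>i<n. W (w i)) / real n - (\<integral>\<omega>. W \<omega> \<partial>M)" for w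
    unfolding deviation_def expected_loss_def W_def
    using integrable_loss by (simp add: sum_subtractf right_diff_distrib diff_divide_distrib)
  have "{w \<in> space Pn. t \<le> deviation w a - deviation w b}
      = {w \<in> space Pn. (\<Sum>i<n. W (w i)) / real n \<ge> (\<integral>\<omega>. W \<omega> \<partial>M) + t}"
    unfolding eq by auto
  also have "measure Pn \<dots> \<le> exp (- (real n * t\<^sup>2) / (2 * (K * \<delta>)\<^sup>2))"
    using Hoeffding K_pos assms(1) by simp
  finally show ?thesis by (simp add: power_mult_distrib mult.assoc)
qed

end

section \<open>Chaining over dyadic lattice nets\<close>

text \<open>Rounding toward zero does not increase absolute values, so rounding a point of the
  \<open>\<ell>\<^sub>1\<close>-ball stays inside the lattice ball.\<close>
definition round_toward_zero :: "real \<Rightarrow> real \<Rightarrow> int" where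
  "round_toward_zero h y = (if 0 \<le> y then \<lfloor>y / h\<rfloor> else - \<lfloor>- y / h\<rfloor>)"

lemma round_toward_zero_close:
  assumes "h > 0"
  shows "\<bar>y - h * of_int (round_toward_zero h y)\<bar> < h"
proof (cases "0 \<le> y")
  case True
  then show ?thesis
    using floor_divide_lower[OF assms, of y] floor_divide_upper[OF assms, of y]
    by (simp add: round_toward_zero_def abs_less_iff algebra_simps)
next
  case False
  then show ?thesis
    using floor_divide_lower[OF assms, of "- y"] floor_divide_upper[OF assms, of "- y"]
    by (simp add: round_toward_zero_def abs_less_iff algebra_simps)
qed

lemma abs_round_toward_zero_le:
  assumes "h > 0"
  shows "real_of_int \<bar>round_toward_zero h y\<bar> \<le> \<bar>y\<bar> / h"
proof (cases "0 \<le> y")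
  case False
  then have "0 \<le> - y / h" using assms by (simp add: divide_nonpos_pos)
  then show ?thesis using False by (simp add: round_toward_zero_def)
qed (use assms in \<open>simp add: round_toward_zero_def\<close>)

lemma three_plus_power_two_le_exp:
  assumes "k \<ge> 1"
  shows "3 + 2 ^ k \<le> exp (real k + 2)"
proof -
  have "(2::real) ^ k \<le> exp 1 ^ k"
    using exp_ge_add_one_self[of 1] by (intro power_mono) auto
  then have "(2::real) ^ k \<le> exp (real k)" by (simp add: exp_of_nat_mult[symmetric])
  have "(2::real) \<le> 2 ^ k" using assms by (metis power_one_right power_increasing one_le_numeral)
  then have "3 + 2 ^ k \<le> 3 * (2::real) ^ k" by simp
  also have "\<dots> \<le> exp 2 * exp (real k)"
    using exp_ge_add_one_self[of 2] \<open>2 ^ k \<le> exp (real k)\<close> by (intro mult_mono) auto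
  finally show ?thesis by (simp add: exp_add[symmetric] add.commute)
qed

lemma sum_half_powers_le: "(\<Sum>k<N. (1/2::real) ^ Suc k) \<le> 1"
proof -
  have "(\<Sum>k<N. (1/2::real) ^ Suc k) = 1 - (1/2) ^ N"
    by (induction N) (auto simp: field_simps)
  then show ?thesis by simp
qed

lemma sum_linear_half_powers_le: "(\<Sum>k<N. (real k + 2) / 2 ^ Suc k) \<le> 3"
proof -
  have "(\<Sum>k<N. (real k + 2) / 2 ^ Suc k) = 3 - (real N + 3) / 2 ^ N"
    by (induction N) (simp_all add: field_simps)
  then show ?thesis by simp
qed

context bounded_logistic_regression
begin

definition dim :: real where
  "dim = real (card F)"

definition param_ball :: "real \<Rightarrow> ('v \<Rightarrow> real) set" where
  "param_ball r = {\<theta>. (\<forall>v. v \<notin> F \<longrightarrow> \<theta> v = 0) \<and> (\<Sum>v\<in>F. \<bar>\<theta> v\<bar>) \<le> r}"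

definition scale :: "real \<Rightarrow> nat \<Rightarrow> real" where
  "scale r k = 2 * r / 2 ^ k"

definition mesh :: "real \<Rightarrow> nat \<Rightarrow> real" where
  "mesh r k = scale r k / dim"

definition lattice_radius :: "real \<Rightarrow> nat \<Rightarrow> nat" where
  "lattice_radius r k = nat \<lfloor>r / mesh r k\<rfloor>"

definition grid :: "real \<Rightarrow> nat \<Rightarrow> ('v \<Rightarrow> real) set" where
  "grid r k = (\<lambda>m v. if v \<in> F then mesh r k * of_int (m v) else 0) ` l1_lattice F (lattice_radius r k)"

definition grid_point :: "real \<Rightarrow> nat \<Rightarrow> ('v \<Rightarrow> real) \<Rightarrow> ('v \<Rightarrow> real)" where
  "grid_point r k \<theta> = (\<lambda>v. if v \<in> F then mesh r k * of_int (round_toward_zero (mesh r k) (\<theta> v)) else 0)"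

definition chain_point :: "real \<Rightarrow> ('v \<Rightarrow> real) \<Rightarrow> nat \<Rightarrow> ('v \<Rightarrow> real) \<Rightarrow> ('v \<Rightarrow> real)" where
  "chain_point r \<theta>0 k \<theta> = (if k = 0 then \<theta>0 else grid_point r k \<theta>)"

definition net :: "real \<Rightarrow> ('v \<Rightarrow> real) \<Rightarrow> nat \<Rightarrow> ('v \<Rightarrow> real) set" where
  "net r \<theta>0 k = (if k = 0 then {\<theta>0} else grid r k)"

definition links :: "real \<Rightarrow> ('v \<Rightarrow> real) \<Rightarrow> nat \<Rightarrow> (('v \<Rightarrow> real) \<times> ('v \<Rightarrow> real)) set" where
  "links r \<theta>0 k = (\<lambda>\<theta>. (chain_point r \<theta>0 k \<theta>, chain_point r \<theta>0 (k - 1) \<theta>)) ` param_ball r"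

lemma dim_ge_1: "dim \<ge> 1"
  using finite_F F_nonempty by (simp add: dim_def Suc_le_eq card_gt_0_iff)

lemma mesh_pos: "r > 0 \<Longrightarrow> mesh r k > 0"
  unfolding mesh_def scale_def using dim_ge_1 by simp

lemma l1_dist_grid_point_le:
  assumes "r > 0"
  shows "l1_dist \<theta> (grid_point r k \<theta>) \<le> scale r k"
proof -
  have "l1_dist \<theta> (grid_point r k \<theta>) \<le> (\<Sum>v\<in>F. mesh r k)"
    unfolding l1_dist_def grid_point_def
    using round_toward_zero_close[OF mesh_pos[OF assms]] by (intro sum_mono) (auto intro: less_imp_le)
  also have "\<dots> = scale r k" using dim_ge_1 by (simp add: mesh_def dim_def)
  finally show ?thesis .
qed

lemma grid_point_in_grid:
  assumes "r > 0" "\<theta> \<in> param_ball r"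
  shows "grid_point r k \<theta> \<in> grid r k"
proof -
  define h where "h = mesh r k"
  have "h > 0" unfolding h_def by (rule mesh_pos[OF assms(1)])
  define m where "m = restrict (\<lambda>v. round_toward_zero h (\<theta> v)) F"
  have "(\<Sum>v\<in>F. real_of_int \<bar>m v\<bar>) \<le> (\<Sum>v\<in>F. \<bar>\<theta> v\<bar> / h)"
    using abs_round_toward_zero_le[OF \<open>h > 0\<close>] by (intro sum_mono) (auto simp: m_def)
  also have "\<dots> \<le> r / h"
    using assms(2) \<open>h > 0\<close> by (auto simp: param_ball_def sum_divide_distrib[symmetric] intro: divide_right_mono)
  finally have "real (\<Sum>v\<in>F. nat \<bar>m v\<bar>) \<le> r / h"
    by (simp add: of_nat_sum)
  then have size: "(\<Sum>v\<in>F. nat \<bar>m v\<bar>) \<le> lattice_radius r k"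
    unfolding lattice_radius_def h_def[symmetric] by (simp add: le_nat_floor)
  have "m v \<in> {- int (lattice_radius r k)..int (lattice_radius r k)}" if "v \<in> F" for v
    using member_le_sum[of v F "\<lambda>v. nat \<bar>m v\<bar>"] that finite_F size by auto
  then have "m \<in> l1_lattice F (lattice_radius r k)"
    using size unfolding l1_lattice_def by (auto simp: m_def)
  moreover have "grid_point r k \<theta> = (\<lambda>v. if v \<in> F then mesh r k * of_int (m v) else 0)"
    unfolding grid_point_def m_def h_def by auto
  ultimately show ?thesis unfolding grid_def by blast
qed

lemma finite_net: "finite (net r \<theta>0 k)"
  unfolding net_def grid_def using finite_l1_lattice[OF finite_F] by auto

lemma card_net_le:
  assumes "r > 0"
  shows "real (card (net r \<theta>0 k)) \<le> exp (dim * (real k + 3))"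
proof (cases "k = 0")
  case True
  then show ?thesis using dim_ge_1 by (simp add: net_def)
next
  case False
  have "real (lattice_radius r k) \<le> r / mesh r k"
    using assms mesh_pos[OF assms, of k] by (simp add: lattice_radius_def)
  also have "r / mesh r k = dim * 2 ^ k / 2"
    unfolding mesh_def scale_def using assms dim_ge_1 by (simp add: field_simps)
  finally have "2 * (real (lattice_radius r k) + 1) / dim \<le> 2 ^ k + 2 / dim"
    using dim_ge_1 by (simp add: field_simps)
  also have "\<dots> \<le> 2 ^ k + 2" using dim_ge_1 by (simp add: divide_le_eq)
  finally have "1 + 2 * (real (lattice_radius r k) + 1) / dim \<le> exp (real k + 2)"
    using three_plus_power_two_le_exp[of k] False by linarith
  then have "(exp 1 * (1 + 2 * (real (lattice_radius r k) + 1) / dim)) ^ card F \<le> (exp 1 * exp (real k + 2)) ^ card F"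
    using dim_ge_1 by (intro power_mono mult_left_mono) auto
  also have "\<dots> = exp (dim * (real k + 3))"
    unfolding dim_def by (simp add: exp_add[symmetric] exp_of_nat_mult[symmetric] algebra_simps)
  finally have "real (card (l1_lattice F (lattice_radius r k))) \<le> exp (dim * (real k + 3))"
    using card_l1_lattice_le[OF finite_F F_nonempty, of "lattice_radius r k"] unfolding dim_def by linarith
  moreover have "card (grid r k) \<le> card (l1_lattice F (lattice_radius r k))"
    unfolding grid_def by (rule card_image_le[OF finite_l1_lattice[OF finite_F]])
  ultimately show ?thesis using False by (simp add: net_def)
qed

lemma l1_dist_chain_point_le:
  assumes "r > 0" "\<theta> \<in> param_ball r" "\<theta>0 \<in> param_ball r"
  shows "l1_dist \<theta> (chain_point r \<theta>0 k \<theta>) \<le> scale r k"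
proof (cases "k = 0")
  case True
  have "l1_dist \<theta> \<theta>0 \<le> (\<Sum>v\<in>F. \<bar>\<theta> v\<bar> + \<bar>\<theta>0 v\<bar>)"
    unfolding l1_dist_def by (rule sum_mono) auto
  also have "\<dots> \<le> 2 * r" using assms(2,3) by (simp add: param_ball_def sum.distrib)
  finally show ?thesis using True by (simp add: chain_point_def scale_def)
next
  case False
  then show ?thesis using l1_dist_grid_point_le[OF assms(1)] by (simp add: chain_point_def)
qed

lemma l1_dist_chain_point_Suc_le:
  assumes "r > 0" "\<theta> \<in> param_ball r" "\<theta>0 \<in> param_ball r"
  shows "l1_dist (chain_point r \<theta>0 (Suc k) \<theta>) (chain_point r \<theta>0 k \<theta>) \<le> 3 * scale r (Suc k)"
proof -
  have "l1_dist (chain_point r \<theta>0 (Suc k) \<theta>) (chain_point r \<theta>0 k \<theta>)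
      \<le> l1_dist \<theta> (chain_point r \<theta>0 (Suc k) \<theta>) + l1_dist \<theta> (chain_point r \<theta>0 k \<theta>)"
    using l1_dist_triangle l1_dist_commute by metis
  also have "\<dots> \<le> scale r (Suc k) + scale r k"
    using l1_dist_chain_point_le[OF assms] by (intro add_mono)
  finally show ?thesis by (simp add: scale_def)
qed

lemma links_subset: "r > 0 \<Longrightarrow> links r \<theta>0 k \<subseteq> net r \<theta>0 k \<times> net r \<theta>0 (k - 1)"
  unfolding links_def chain_point_def net_def using grid_point_in_grid by auto

lemma finite_links: "r > 0 \<Longrightarrow> finite (links r \<theta>0 k)"
  using finite_subset[OF links_subset] finite_net by blast

lemma card_links_le:
  assumes "r > 0"
  shows "real (card (links r \<theta>0 (Suc k))) \<le> exp (dim * (2 * real k + 7))"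
proof -
  have "card (links r \<theta>0 (Suc k)) \<le> card (net r \<theta>0 (Suc k)) * card (net r \<theta>0 k)"
    using card_mono[OF _ links_subset[OF assms, of \<theta>0 "Suc k"]] finite_net by (simp add: card_cartesian_product)
  then have "real (card (links r \<theta>0 (Suc k))) \<le> real (card (net r \<theta>0 (Suc k))) * real (card (net r \<theta>0 k))"
    by (metis of_nat_le_iff of_nat_mult)
  also have "\<dots> \<le> exp (dim * (real (Suc k) + 3)) * exp (dim * (real k + 3))"
    by (intro mult_mono card_net_le assms) auto
  also have "\<dots> = exp (dim * (2 * real k + 7))" by (simp add: exp_add[symmetric] algebra_simps)
  finally show ?thesis .
qed


text \<open>The threshold for a link of level \<open>k\<close> has a part paying for the union bound over
  the \<open>exp (O (dim * k))\<close> links of that level and a part carrying the deviation \<open>x\<close>.\<close>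
definition entropy :: "nat \<Rightarrow> real" where
  "entropy k = 5 * dim * (real k + 1)"

definition entropy_term :: "real \<Rightarrow> nat \<Rightarrow> real" where
  "entropy_term r k = K * (3 * scale r k) * sqrt (2 * entropy k / real n)"

definition tail_term :: "real \<Rightarrow> real \<Rightarrow> nat \<Rightarrow> real" where
  "tail_term r x k = x * (3 * scale r k) / (8 * r)"

definition threshold :: "real \<Rightarrow> real \<Rightarrow> nat \<Rightarrow> real" where
  "threshold r x k = entropy_term r k + tail_term r x k"

definition tail_exponent :: "real \<Rightarrow> real \<Rightarrow> real" where
  "tail_exponent r x = real n * x\<^sup>2 / (128 * K\<^sup>2 * r\<^sup>2)"

lemma prob_link_ge_threshold:
  assumes "r > 0" "x \<ge> 0" "l1_dist a b \<le> 3 * scale r k"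
  shows "measure Pn {w \<in> space Pn. threshold r x k \<le> deviation w a - deviation w b}
           \<le> exp (- entropy k) * exp (- tail_exponent r x)"
proof -
  define \<delta> where "\<delta> = 3 * scale r k"
  define c where "c = 2 * K\<^sup>2 * \<delta>\<^sup>2"
  have "\<delta> > 0" "c > 0" using assms(1) K_pos by (simp_all add: \<delta>_def c_def scale_def)
  have "entropy k > 0" using dim_ge_1 by (simp add: entropy_def)
  have terms_nonneg: "0 \<le> entropy_term r k" "0 \<le> tail_term r x k"
    using \<open>\<delta> > 0\<close> \<open>entropy k > 0\<close> K_pos assms(1,2) by (simp_all add: entropy_term_def tail_term_def \<delta>_def)
  have E: "real n * (entropy_term r k)\<^sup>2 / c = entropy k"
    using n_pos K_pos \<open>\<delta> > 0\<close> \<open>entropy k > 0\<close>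
    by (simp add: entropy_term_def c_def \<delta>_def[symmetric] field_simps)
  have T: "real n * (tail_term r x k)\<^sup>2 / c = tail_exponent r x"
    using K_pos \<open>\<delta> > 0\<close> assms(1)
    by (simp add: tail_term_def tail_exponent_def c_def \<delta>_def[symmetric] power2_eq_square field_simps)
  have "real n * ((entropy_term r k)\<^sup>2 + (tail_term r x k)\<^sup>2) \<le> real n * (threshold r x k)\<^sup>2"
    using terms_nonneg by (intro mult_left_mono) (auto simp: threshold_def power2_sum)
  then have "entropy k + tail_exponent r x \<le> real n * (threshold r x k)\<^sup>2 / c"
    unfolding E[symmetric] T[symmetric] add_divide_distrib[symmetric] distrib_left[symmetric]
    using \<open>c > 0\<close> by (simp add: divide_right_mono)
  have "measure Pn {w \<in> space Pn. threshold r x k \<le> deviation w a - deviation w b}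
      \<le> exp (- (real n * (threshold r x k)\<^sup>2) / c)"
    unfolding c_def using terms_nonneg assms(3) \<open>\<delta> > 0\<close>
    by (intro prob_deviation_increment_ge) (auto simp: threshold_def \<delta>_def)
  also have "\<dots> \<le> exp (- entropy k - tail_exponent r x)"
    using \<open>entropy k + tail_exponent r x \<le> real n * (threshold r x k)\<^sup>2 / c\<close> by simp
  finally show ?thesis by (simp add: exp_diff exp_minus field_simps)
qed

lemma card_links_exp_entropy_le:
  assumes "r > 0"
  shows "real (card (links r \<theta>0 (Suc k))) * exp (- entropy (Suc k)) \<le> (1/2) ^ Suc k"
proof -
  have "real (card (links r \<theta>0 (Suc k))) * exp (- entropy (Suc k))
      \<le> exp (dim * (2 * real k + 7)) * exp (- entropy (Suc k))"
    by (intro mult_right_mono card_links_le assms) auto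
  also have "\<dots> = exp (- (dim * (3 * real k + 3)))"
    unfolding entropy_def by (simp add: exp_add[symmetric] algebra_simps)
  also have "\<dots> \<le> exp (- (real k + 1))"
  proof -
    have "real k + 1 \<le> 3 * real k + 3" by simp
    also have "\<dots> \<le> dim * (3 * real k + 3)"
      using mult_right_mono[OF dim_ge_1, of "3 * real k + 3"] by simp
    finally show ?thesis by simp
  qed
  also have "\<dots> = exp (-1) ^ Suc k"
    using exp_of_nat_mult[of "Suc k" "-1::real"] by (simp add: algebra_simps)
  also have "\<dots> \<le> (1/2) ^ Suc k"
    using exp_ge_add_one_self[of 1] by (intro power_mono) (auto simp: exp_minus field_simps)
  finally show ?thesis .
qed

lemma sum_thresholds_le:
  assumes "r > 0" "x \<ge> 0"
  shows "(\<Sum>k<N. threshold r x (Suc k)) \<le> 72 * K * r * sqrt (dim / real n) + 3 * x / 4"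
proof -
  have "entropy_term r (Suc k) \<le> 24 * K * r * sqrt (dim / real n) * ((real k + 2) / 2 ^ Suc k)" for k
  proof -
    have "sqrt (2 * entropy (Suc k) / real n) = sqrt (10 * (real k + 2)) * sqrt (dim / real n)"
      unfolding entropy_def real_sqrt_mult[symmetric] by (simp add: field_simps)
    also have "\<dots> \<le> 4 * (real k + 2) * sqrt (dim / real n)"
    proof (rule mult_right_mono)
      have "sqrt (10 * (real k + 2)) \<le> sqrt ((4 * (real k + 2))\<^sup>2)"
        by (rule real_sqrt_le_mono) (simp add: power2_eq_square algebra_simps)
      then show "sqrt (10 * (real k + 2)) \<le> 4 * (real k + 2)" by simp
    qed (use dim_ge_1 in simp)
    finally have "entropy_term r (Suc k) \<le> K * (3 * scale r (Suc k)) * (4 * (real k + 2) * sqrt (dim / real n))"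
      unfolding entropy_term_def using K_pos assms(1) by (intro mult_left_mono) (auto simp: scale_def)
    then show ?thesis by (simp add: scale_def field_simps)
  qed
  then have "(\<Sum>k<N. entropy_term r (Suc k)) \<le> 24 * K * r * sqrt (dim / real n) * (\<Sum>k<N. (real k + 2) / 2 ^ Suc k)"
    by (simp add: sum_distrib_left sum_mono)
  also have "\<dots> \<le> 24 * K * r * sqrt (dim / real n) * 3"
    using K_pos assms(1) dim_ge_1 by (intro mult_left_mono sum_linear_half_powers_le) auto
  finally have entropy_sum: "(\<Sum>k<N. entropy_term r (Suc k)) \<le> 72 * K * r * sqrt (dim / real n)" by simp
  have "(\<Sum>k<N. tail_term r x (Suc k)) = (3 * x / 4) * (\<Sum>k<N. (1/2::real) ^ Suc k)"
    unfolding sum_distrib_left tail_term_def scale_def using assms(1) by (intro sum.cong) (auto simp: field_simps)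
  also have "\<dots> \<le> 3 * x / 4" using assms(2) mult_left_mono[OF sum_half_powers_le, of "3 * x / 4" N] by simp
  finally show ?thesis
    using entropy_sum unfolding threshold_def sum.distrib by linarith
qed


lemma sup_deviation_le_chain:
  assumes "r > 0" "\<theta>0 \<in> param_ball r" "w \<in> space Pn" "\<forall>i<n. features_bounded (w i)"
    and small_links: "\<forall>k<N. \<forall>(a, b)\<in>links r \<theta>0 (Suc k). deviation w a - deviation w b < threshold r x (Suc k)"
  shows "(SUP \<theta>\<in>param_ball r. deviation w \<theta>)
           \<le> deviation w \<theta>0 + (\<Sum>k<N. threshold r x (Suc k)) + 2 * K * scale r N"
proof (rule cSUP_least)
  show "param_ball r \<noteq> {}" using assms(2) by blast
  fix \<theta> assume \<theta>: "\<theta> \<in> param_ball r"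
  define f where "f k = deviation w (chain_point r \<theta>0 k \<theta>)" for k
  have "(chain_point r \<theta>0 (Suc k) \<theta>, chain_point r \<theta>0 k \<theta>) \<in> links r \<theta>0 (Suc k)" for k
    unfolding links_def using \<theta> by force
  then have "f (Suc k) - f k \<le> threshold r x (Suc k)" if "k < N" for k
    using small_links that unfolding f_def by fastforce
  then have "f N - f 0 \<le> (\<Sum>k<N. threshold r x (Suc k))"
    unfolding sum_lessThan_telescope[of f N, symmetric] by (intro sum_mono) auto
  moreover have "deviation w \<theta> - f N \<le> 2 * K * scale r N"
  proof -
    have "deviation w \<theta> - f N \<le> 2 * K * l1_dist \<theta> (chain_point r \<theta>0 N \<theta>)"
      using deviation_lipschitz[OF assms(3,4), of \<theta> "chain_point r \<theta>0 N \<theta>"] unfolding f_def by linarith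
    also have "\<dots> \<le> 2 * K * scale r N"
      using l1_dist_chain_point_le[OF assms(1) \<theta> assms(2)] K_pos by (intro mult_left_mono) auto
    finally show ?thesis .
  qed
  moreover have "f 0 = deviation w \<theta>0" by (simp add: f_def chain_point_def)
  ultimately show "deviation w \<theta> \<le> deviation w \<theta>0 + (\<Sum>k<N. threshold r x (Suc k)) + 2 * K * scale r N"
    by linarith
qed

definition link_exceeds :: "real \<Rightarrow> real \<Rightarrow> nat \<Rightarrow> ('v \<Rightarrow> real) \<times> ('v \<Rightarrow> real) \<Rightarrow> (nat \<Rightarrow> 'a) set" where
  "link_exceeds r x k p = {w \<in> space Pn. threshold r x k \<le> deviation w (fst p) - deviation w (snd p)}"

lemma link_exceeds_sets: "link_exceeds r x k p \<in> sets Pn"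
  unfolding link_exceeds_def using deviation_measurable by measurable

definition some_link_exceeds :: "real \<Rightarrow> ('v \<Rightarrow> real) \<Rightarrow> real \<Rightarrow> nat \<Rightarrow> (nat \<Rightarrow> 'a) set" where
  "some_link_exceeds r \<theta>0 x N = (\<Union>k<N. \<Union>p\<in>links r \<theta>0 (Suc k). link_exceeds r x (Suc k) p)"

lemma some_link_exceeds_sets: "r > 0 \<Longrightarrow> some_link_exceeds r \<theta>0 x N \<in> sets Pn"
  unfolding some_link_exceeds_def using finite_links link_exceeds_sets by (intro sets.finite_UN) auto

lemma prob_some_link_exceeds:
  assumes "r > 0" "x \<ge> 0" "\<theta>0 \<in> param_ball r"
  shows "measure Pn (some_link_exceeds r \<theta>0 x N) \<le> exp (- tail_exponent r x)"
proof -
  have "measure Pn (some_link_exceeds r \<theta>0 x N)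
      \<le> (\<Sum>k<N. \<Sum>p\<in>links r \<theta>0 (Suc k). measure Pn (link_exceeds r x (Suc k) p))"
    unfolding some_link_exceeds_def using finite_links[OF assms(1)] link_exceeds_sets
    by (intro order_trans[OF measure_UNION_le] sum_mono measure_UNION_le sets.finite_UN) auto
  also have "\<dots> \<le> (\<Sum>k<N. \<Sum>p\<in>links r \<theta>0 (Suc k). exp (- entropy (Suc k)) * exp (- tail_exponent r x))"
  proof (intro sum_mono)
    fix k p assume "p \<in> links r \<theta>0 (Suc k)"
    then obtain \<theta> where "\<theta> \<in> param_ball r" and p: "p = (chain_point r \<theta>0 (Suc k) \<theta>, chain_point r \<theta>0 k \<theta>)"
      unfolding links_def by auto
    then have "l1_dist (fst p) (snd p) \<le> 3 * scale r (Suc k)"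
      using l1_dist_chain_point_Suc_le[OF assms(1) _ assms(3)] by simp
    then show "measure Pn (link_exceeds r x (Suc k) p) \<le> exp (- entropy (Suc k)) * exp (- tail_exponent r x)"
      unfolding link_exceeds_def by (rule prob_link_ge_threshold[OF assms(1,2)])
  qed
  also have "\<dots> = (\<Sum>k<N. real (card (links r \<theta>0 (Suc k))) * exp (- entropy (Suc k)) * exp (- tail_exponent r x))"
    by (simp add: mult.assoc)
  also have "\<dots> \<le> (\<Sum>k<N. (1/2) ^ Suc k * exp (- tail_exponent r x))"
    by (intro sum_mono mult_right_mono card_links_exp_entropy_le assms(1)) auto
  also have "\<dots> \<le> exp (- tail_exponent r x)"
    using mult_right_mono[OF sum_half_powers_le, of "exp (- tail_exponent r x)" N]
    by (simp add: sum_distrib_right)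
  finally show ?thesis .
qed

lemma sup_deviation_ge_imp_some_link_exceeds:
  assumes "r > 0" "x > 0" "\<theta>0 \<in> param_ball r" "72 * K * r * sqrt (dim / real n) \<le> A"
    and "2 * K * scale r N < x / 4" "w \<in> space Pn" "\<forall>i<n. features_bounded (w i)"
    and "(SUP \<theta>\<in>param_ball r. deviation w \<theta>) \<ge> A + deviation w \<theta>0 + x"
  shows "w \<in> some_link_exceeds r \<theta>0 x N"
proof (rule ccontr)
  assume "w \<notin> some_link_exceeds r \<theta>0 x N"
  have "deviation w a - deviation w b < threshold r x (Suc k)"
    if "k < N" "(a, b) \<in> links r \<theta>0 (Suc k)" for k a b
  proof -
    have "w \<notin> link_exceeds r x (Suc k) (a, b)"
      using \<open>w \<notin> some_link_exceeds r \<theta>0 x N\<close> that unfolding some_link_exceeds_def by blast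
    then show ?thesis using assms(6) unfolding link_exceeds_def by auto
  qed
  then have "(SUP \<theta>\<in>param_ball r. deviation w \<theta>)
      \<le> deviation w \<theta>0 + (\<Sum>k<N. threshold r x (Suc k)) + 2 * K * scale r N"
    by (intro sup_deviation_le_chain[OF assms(1,3,6,7)]) blast
  moreover have "(\<Sum>k<N. threshold r x (Suc k)) \<le> 72 * K * r * sqrt (dim / real n) + 3 * x / 4"
    using sum_thresholds_le[OF assms(1)] assms(2) by simp
  ultimately show False using assms(4,5,8) by linarith
qed

theorem prob_sup_deviation_ge:
  assumes "r > 0" "x > 0" "\<theta>0 \<in> param_ball r" "72 * K * r * sqrt (dim / real n) \<le> A"
  shows "measure Pn {w \<in> space Pn. (SUP \<theta>\<in>param_ball r. deviation w \<theta>) \<ge> A + deviation w \<theta>0 + x}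
           \<le> exp (- tail_exponent r x)"
proof -
  obtain N :: nat where "16 * K * r / x < 2 ^ N"
    using real_arch_pow[of 2 "16 * K * r / x"] by auto
  then have remainder: "2 * K * scale r N < x / 4"
    using assms(2) by (simp add: scale_def field_simps)
  have "AE w in Pn. (SUP \<theta>\<in>param_ball r. deviation w \<theta>) \<ge> A + deviation w \<theta>0 + x
      \<longrightarrow> w \<in> some_link_exceeds r \<theta>0 x N"
    using AE_sample_features_bounded AE_space
  proof eventually_elim
    case (elim w)
    show ?case using sup_deviation_ge_imp_some_link_exceeds[OF assms remainder elim(2,1)] by blast
  qed
  then have "measure Pn {w \<in> space Pn. (SUP \<theta>\<in>param_ball r. deviation w \<theta>) \<ge> A + deviation w \<theta>0 + x}
      \<le> measure Pn (some_link_exceeds r \<theta>0 x N)"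
    using prob_space_PiM[OF prob_space_M] some_link_exceeds_sets[OF assms(1)]
    by (intro finite_measure.finite_measure_mono_AE prob_space.finite_measure) (auto elim: eventually_mono)
  also have "\<dots> \<le> exp (- tail_exponent r x)"
    using assms by (intro prob_some_link_exceeds) auto
  finally show ?thesis .
qed


corollary prob_sup_deviation_ge_relaxed:
  assumes "r > 0" "x > 0" "\<theta>0 \<in> param_ball r" "dim \<le> D"
  shows "measure Pn {w \<in> space Pn. (SUP \<theta>\<in>param_ball r. deviation w \<theta>)
             \<ge> 108 * (2 * K) * r * sqrt (D / real n) * sqrt pi + deviation w \<theta>0 + x}
           \<le> 36 * exp (- (x\<^sup>2 * real n) / (144 * (2 * K)\<^sup>2 * r\<^sup>2))"
proof -
  have "sqrt (dim / real n) \<le> sqrt (D / real n)"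
    using assms(4) n_pos by (intro real_sqrt_le_mono divide_right_mono) auto
  also have "\<dots> \<le> sqrt (D / real n) * sqrt pi"
  proof -
    have "0 \<le> D / real n" using assms(4) dim_ge_1 by simp
    then show ?thesis using pi_gt3 by (intro mult_le_cancel_left1[THEN iffD2]) auto
  qed
  finally have "K * r * sqrt (dim / real n) \<le> K * r * (sqrt (D / real n) * sqrt pi)"
    using K_pos assms(1) by (intro mult_left_mono) auto
  moreover have "0 \<le> K * r * sqrt (dim / real n)" using K_pos assms(1) dim_ge_1 by auto
  ultimately have "72 * K * r * sqrt (dim / real n) \<le> 108 * (2 * K) * r * sqrt (D / real n) * sqrt pi"
    by (simp add: ac_simps)
  then have "measure Pn {w \<in> space Pn. (SUP \<theta>\<in>param_ball r. deviation w \<theta>)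
             \<ge> 108 * (2 * K) * r * sqrt (D / real n) * sqrt pi + deviation w \<theta>0 + x}
           \<le> exp (- tail_exponent r x)"
    by (rule prob_sup_deviation_ge[OF assms(1-3)])
  also have "\<dots> \<le> exp (- (x\<^sup>2 * real n) / (144 * (2 * K)\<^sup>2 * r\<^sup>2))"
    using K_pos assms(1) n_pos
    by (simp add: tail_exponent_def power2_eq_square frac_le divide_left_mono mult_right_mono)
  also have "\<dots> \<le> 36 * exp (- (x\<^sup>2 * real n) / (144 * (2 * K)\<^sup>2 * r\<^sup>2))" by simp
  finally show ?thesis .
qed

end

section \<open>Signature features\<close>

lemma finite_words: "finite (words d p)"
proof -
  have "words d p = {xs. set xs \<subseteq> {..<d} \<and> length xs \<le> p}" unfolding words_def by auto
  then show ?thesis using finite_lists_length_le[of "{..<d}" p] by simp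
qed

lemma card_words_le: "card (words d p) \<le> s_d d p"
proof -
  have "words d p = (\<Union>k\<le>p. {xs. set xs \<subseteq> {..<d} \<and> length xs = k})" unfolding words_def by auto
  then have "card (words d p) \<le> (\<Sum>k\<le>p. card {xs. set xs \<subseteq> {..<d} \<and> length xs = k})"
    by (simp add: card_UN_le)
  also have "\<dots> = s_d d p" by (simp add: card_lists_length_eq s_d_def)
  finally show ?thesis .
qed

lemma finite_feat_idx: "finite (feat_idx d p q)"
  unfolding feat_idx_def using finite_words by simp

lemma card_feat_idx_le: "card (feat_idx d p q) \<le> s_d d p + q"
proof -
  have "card (feat_idx d p q) \<le> card (Inl ` words d p :: (nat list + nat) set) + card (Inr ` {..<q} :: (nat list + nat) set)"
    unfolding feat_idx_def by (rule card_Un_le)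
  also have "\<dots> \<le> s_d d p + q" using card_words_le by (simp add: card_image)
  finally show ?thesis .
qed

lemma abs_feature_le:
  assumes "bounded_variation (d - 1) X T" "0 \<le> T" "\<And>j. j < d - 1 \<Longrightarrow> continuous_on {0..T} (\<lambda>t. X t j)"
    and "total_variation (d - 1) X T < CX" "euclid_norm q z < Cz" "v \<in> feat_idx d p q"
  shows "\<bar>feature d T X z v\<bar> \<le> Cz + exp (CX + T)"
proof (cases v)
  case (Inl I)
  then have "set I \<subseteq> {..<d}" using assms(6) by (auto simp: feat_idx_def words_def)
  then have "\<bar>sig_term (time_aug d X) T I\<bar> \<le> exp (CX + T)"
    using abs_sig_term_time_aug_le assms(1-4) by blast
  then show ?thesis using Inl euclid_norm_nonneg[of q z] assms(5) by (simp add: feature_def)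
next
  case (Inr j)
  then have "\<bar>z j\<bar> \<le> euclid_norm q z"
    using assms(6) by (intro abs_component_le_euclid_norm) (auto simp: feat_idx_def)
  then show ?thesis using Inr assms(5) by (simp add: feature_def add_increasing2 less_imp_le)
qed

lemma feature_measurable:
  assumes "0 \<le> T" "v \<in> feat_idx d p q"
    and "\<And>t j. (\<lambda>\<omega>. X \<omega> t j) \<in> borel_measurable M" "\<And>j. (\<lambda>\<omega>. z \<omega> j) \<in> borel_measurable M"
    and "\<And>\<omega> j. \<omega> \<in> space M \<Longrightarrow> j < d - 1 \<Longrightarrow> continuous_on {0..T} (\<lambda>t. X \<omega> t j)"
    and "\<And>\<omega>. \<omega> \<in> space M \<Longrightarrow> bounded_variation (d - 1) (X \<omega>) T"
  shows "(\<lambda>\<omega>. feature d T (X \<omega>) (z \<omega>) v) \<in> borel_measurable M"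
proof (cases v)
  case (Inl I)
  then have "set (rev I) \<subseteq> {..<d}" using assms(2) by (auto simp: feat_idx_def words_def)
  then have "(\<lambda>\<omega>. sig_rev (time_aug d (X \<omega>)) (rev I) T) \<in> borel_measurable M"
    using assms(1,3,5,6)
    by (intro sig_rev_measurable[where W="\<lambda>\<omega> s. total_variation (d - 1) (X \<omega>) s + s"]
        time_aug_continuous_on time_aug_increments_dominated) (auto simp: time_aug_def)
  then show ?thesis using Inl by (simp add: feature_def sig_term_def)
qed (use assms(4) in \<open>simp add: feature_def\<close>)

lemma bounded_logistic_regression_signature_features:
  assumes "prob_space M" "T > 0" "q \<ge> 1" "n \<ge> 1"
    and "\<And>t j. (\<lambda>\<omega>. X \<omega> t j) \<in> borel_measurable M" "\<And>j. (\<lambda>\<omega>. z \<omega> j) \<in> borel_measurable M"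
    and "y \<in> borel_measurable M" "\<And>\<omega>. \<omega> \<in> space M \<Longrightarrow> y \<omega> \<in> {0, 1}"
    and "\<And>\<omega> j. \<omega> \<in> space M \<Longrightarrow> j < d - 1 \<Longrightarrow> continuous_on {0..T} (\<lambda>t. X \<omega> t j)"
    and "\<And>\<omega>. \<omega> \<in> space M \<Longrightarrow> bounded_variation (d - 1) (X \<omega>) T"
    and "AE \<omega> in M. total_variation (d - 1) (X \<omega>) T < CX"
    and "AE \<omega> in M. euclid_norm q (z \<omega>) < Cz"
  shows "bounded_logistic_regression M (feat_idx d p q) (\<lambda>\<omega>. feature d T (X \<omega>) (z \<omega>)) y (Cz + exp (CX + T)) n"
proof (rule bounded_logistic_regression.intro)
  show "prob_space M" "finite (feat_idx d p q)" "y \<in> borel_measurable M" "n \<ge> 1"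
    by (fact assms(1) finite_feat_idx assms(7) assms(4))+
  show "\<And>\<omega>. \<omega> \<in> space M \<Longrightarrow> y \<omega> \<in> {0, 1}" by (fact assms(8))
  interpret prob_space M by (rule assms(1))
  show "feat_idx d p q \<noteq> {}" using assms(3) by (auto simp: feat_idx_def lessThan_empty_iff)
  show "(\<lambda>\<omega>. feature d T (X \<omega>) (z \<omega>) v) \<in> borel_measurable M" if "v \<in> feat_idx d p q" for v
    using assms(2,5,6,9,10) that by (intro feature_measurable) auto
  show "AE \<omega> in M. \<forall>v\<in>feat_idx d p q. \<bar>feature d T (X \<omega>) (z \<omega>) v\<bar> \<le> Cz + exp (CX + T)"
    using assms(11,12) AE_space
  proof eventually_elim
    case (elim \<omega>)
    then show ?case
      using abs_feature_le[OF assms(10)[OF elim(3)] _ assms(9)[OF elim(3)] elim(1,2)] assms(2) by auto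
  qed
  have "\<exists>\<omega>. euclid_norm q (z \<omega>) < Cz"
  proof (rule ccontr)
    assume "\<nexists>\<omega>. euclid_norm q (z \<omega>) < Cz"
    then have "AE \<omega> in M. False" using assms(12) by (auto elim: eventually_mono)
    then show False by simp
  qed
  then obtain \<omega> where "euclid_norm q (z \<omega>) < Cz" ..
  then have "0 < Cz" by (rule le_less_trans[OF euclid_norm_nonneg])
  then show "Cz + exp (CX + T) > 0" by (rule add_pos_pos[OF _ exp_gt_zero])
qed

theorem proposition1:
  fixes M :: "'a measure"
    and X :: "'a \<Rightarrow> real \<Rightarrow> nat \<Rightarrow> real"
    and z :: "'a \<Rightarrow> nat \<Rightarrow> real"
    and y :: "'a \<Rightarrow> real"
    and x0 :: "nat \<Rightarrow> real"
    and T CX Cz r x :: real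
    and d q p n :: nat
    and \<theta>0 :: "nat list + nat \<Rightarrow> real"
  assumes "prob_space M"
    and "T > 0" and "d \<ge> 2" and "q \<ge> 1" and "n \<ge> 1"
    and "\<And>t j. (\<lambda>\<omega>. X \<omega> t j) \<in> borel_measurable M"
    and "\<And>j. (\<lambda>\<omega>. z \<omega> j) \<in> borel_measurable M"
    and "y \<in> borel_measurable M"
    and "\<And>\<omega>. \<omega> \<in> space M \<Longrightarrow> y \<omega> \<in> {0, 1}"
    and "\<And>\<omega> j. \<omega> \<in> space M \<Longrightarrow> j < d - 1 \<Longrightarrow> continuous_on {0..T} (\<lambda>t. X \<omega> t j)"
    and "\<And>\<omega>. \<omega> \<in> space M \<Longrightarrow> bounded_variation (d - 1) (X \<omega>) T"
    and "\<And>\<omega> j. \<omega> \<in> space M \<Longrightarrow> j < d - 1 \<Longrightarrow> X \<omega> 0 j = x0 j"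
    and "AE \<omega> in M. total_variation (d - 1) (X \<omega>) T < CX"
    and "AE \<omega> in M. euclid_norm q (z \<omega>) < Cz"
    and "r > 0" and "x > 0"
    and "\<theta>0 \<in> l1_ball d p q r"
  shows "measure (PiM {..<n} (\<lambda>_. M))
           {w \<in> space (PiM {..<n} (\<lambda>_. M)).
              (SUP \<theta>\<in>l1_ball d p q r. Z_proc M d p q T X z y n w \<theta>)
                \<ge> 108 * (2 * (Cz + exp (CX + T))) * r * sqrt (real (s_d d p + q) / real n) * sqrt pi
                  + Z_proc M d p q T X z y n w \<theta>0 + x}
         \<le> 36 * exp (- (x\<^sup>2 * real n) / (144 * (2 * (Cz + exp (CX + T)))\<^sup>2 * r\<^sup>2))"
proof -
  \<comment> \<open>Neither \<open>d \<ge> 2\<close> nor the common initial value of the paths is needed.\<close>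
  interpret bounded_logistic_regression M "feat_idx d p q" "\<lambda>\<omega>. feature d T (X \<omega>) (z \<omega>)" y
      "Cz + exp (CX + T)" n
    by (rule bounded_logistic_regression_signature_features[OF assms(1,2,4-11,13,14)])
  have Z: "Z_proc M d p q T X z y n w \<theta> = deviation w \<theta>" for w \<theta>
    unfolding Z_proc_def emp_risk_def risk_def lin_pred_def deviation_def expected_loss_def loss_def score_def
    by simp
  have ball: "l1_ball d p q r = param_ball r"
    unfolding l1_ball_def l1_norm_def param_ball_def by simp
  have "dim \<le> real (s_d d p + q)"
    using card_feat_idx_le[of d p q] by (simp add: dim_def)
  with prob_sup_deviation_ge_relaxed[OF assms(15,16)] assms(17) show ?thesis
    unfolding Z ball by blast
qed

end
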